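(* For every hyperstonean locale $H$, the Boolean algebra $\mathrm{COpen}(H)$ of compact opens of $H$ is a localizable Boolean algebra, and for every localizable Boolean algebra $A$, the frame $\mathrm{Idl}(A)$ of ideals of $A$ is a hyperstonean locale. The adjoint equivalence between Stonean locales (with open maps) and the opposite of complete Boolean algebras (with supremum-preserving homomorphisms), given by $\mathrm{COpen}$ and $\mathrm{Ideal}$, restricts to an adjoint equivalence $\mathsf{HStoneanLoc}\simeq\mathsf{LBAlg}^{\mathrm{op}}=\mathsf{MLoc}$.
   Context: Frames, locales: a frame is a poset with finite meets and arbitrary joins, binary meets distributing over joins; locales are the opposite category; a locale map $f$ has frame homomorphism $f^*$. $x\to y=\sup\{w:w\wedge x\le y\}$, $\neg x=x\to0$. A locale map is open if $f^*$ preserves arbitrary meets and Heyting implications. Compact open $a$: $\bigvee S\ge a$ implies $\bigvee F\ge a$ for some finite $F\subset S$. Coherent: compact opens closed under finite meets (including top) and generate under joins; regular: $y=\bigvee\{x:\neg x\vee y=1\}$; extremally disconnected: $\neg x\vee\neg\neg x=1$. Stonean locale: coherent, regular, extremally disconnected. A continuous valuation $\nu:L\to[0,\infty)$: $\nu(0)=0$, modular, monotone, preserving directed suprema; normal if $\nu(\neg\neg a)=\nu(a)$. A hyperstonean locale is a Stonean locale such that for each $a\neq0$ there is a normal valuation $\nu$ with $\nu(a)\ne0$; $\mathsf{HStoneanLoc}$ has open locale maps as morphisms. A Boolean algebra $A$ is localizable if complete and $1$ is the supremum of all $a$ for which $\{b\le a\}$ admits a faithful continuous valuation; $\mathsf{LBAlg}$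 has supremum-preserving Boolean homomorphisms as morphisms. An ideal of a distributive lattice is a down-closed subset closed under finite joins; $\mathrm{Ideal}(A)$ is the locale whose frame is the set of ideals of $A$ ordered by inclusion. The unit $H\to\mathrm{Ideal}(\mathrm{COpen}(H))$ sends an ideal to its join, and $a\in A$ corresponds to its principal ideal. *)

theory Defs
  imports Main Complex_Main
begin

text \<open>Posets are represented as carrier sets inside a type with a partial order;
  all lattice operations are computed relative to the carrier.\<close>

definition p_is_lub :: "'a::order set \<Rightarrow> 'a set \<Rightarrow> 'a \<Rightarrow> bool" where
  "p_is_lub S X x \<longleftrightarrow> x \<in> S \<and> (\<forall>y\<in>X. y \<le> x) \<and> (\<forall>z\<in>S. (\<forall>y\<in>X. y \<le> z) \<longrightarrow> x \<le> z)"

definition p_is_glb :: "'a::order set \<Rightarrow> 'a set \<Rightarrow> 'a \<Rightarrow> bool" where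
  "p_is_glb S X x \<longleftrightarrow> x \<in> S \<and> (\<forall>y\<in>X. x \<le> y) \<and> (\<forall>z\<in>S. (\<forall>y\<in>X. z \<le> y) \<longrightarrow> z \<le> x)"

definition pjoin :: "'a::order set \<Rightarrow> 'a set \<Rightarrow> 'a" where
  "pjoin S X = (THE x. p_is_lub S X x)"

definition pmeet :: "'a::order set \<Rightarrow> 'a set \<Rightarrow> 'a" where
  "pmeet S X = (THE x. p_is_glb S X x)"

definition pjoin2 :: "'a::order set \<Rightarrow> 'a \<Rightarrow> 'a \<Rightarrow> 'a" where
  "pjoin2 S a b = pjoin S {a, b}"

definition pmeet2 :: "'a::order set \<Rightarrow> 'a \<Rightarrow> 'a \<Rightarrow> 'a" where
  "pmeet2 S a b = pmeet S {a, b}"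

definition ptop :: "'a::order set \<Rightarrow> 'a" where
  "ptop S = pmeet S {}"

definition pbot :: "'a::order set \<Rightarrow> 'a" where
  "pbot S = pjoin S {}"

definition complete_poset :: "'a::order set \<Rightarrow> bool" where
  "complete_poset S \<longleftrightarrow> (\<forall>X\<subseteq>S. \<exists>x. p_is_lub S X x)"

definition frame :: "'a::order set \<Rightarrow> bool" where
  "frame S \<longleftrightarrow> complete_poset S \<and>
     (\<forall>a\<in>S. \<forall>X\<subseteq>S. pmeet2 S a (pjoin S X) = pjoin S ((\<lambda>x. pmeet2 S a x) ` X))"

definition himp :: "'a::order set \<Rightarrow> 'a \<Rightarrow> 'a \<Rightarrow> 'a" where
  "himp S x y = pjoin S {w\<in>S. pmeet2 S w x \<le> y}"

definition pneg :: "'a::order set \<Rightarrow> 'a \<Rightarrow> 'a" where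
  "pneg S x = himp S x (pbot S)"

text \<open>Frame homomorphism S \<rightarrow> T: preserves finite meets and arbitrary joins.
  A locale map f : H \<rightarrow> H' is represented by its frame homomorphism f^* : H' \<rightarrow> H.\<close>
definition frame_hom :: "'a::order set \<Rightarrow> 'b::order set \<Rightarrow> ('a \<Rightarrow> 'b) \<Rightarrow> bool" where
  "frame_hom S T h \<longleftrightarrow> (\<forall>x\<in>S. h x \<in> T) \<and> h (ptop S) = ptop T \<and>
     (\<forall>a\<in>S. \<forall>b\<in>S. h (pmeet2 S a b) = pmeet2 T (h a) (h b)) \<and>
     (\<forall>X\<subseteq>S. h (pjoin S X) = pjoin T (h ` X))"

text \<open>f^* of an open locale map: additionally preserves arbitrary meets and Heyting implications.\<close>
definition open_frame_hom :: "'a::order set \<Rightarrow> 'b::order set \<Rightarrow> ('a \<Rightarrow> 'b) \<Rightarrow> bool" where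
  "open_frame_hom S T h \<longleftrightarrow> frame_hom S T h \<and>
     (\<forall>X\<subseteq>S. h (pmeet S X) = pmeet T (h ` X)) \<and>
     (\<forall>a\<in>S. \<forall>b\<in>S. h (himp S a b) = himp T (h a) (h b))"

definition compact_open :: "'a::order set \<Rightarrow> 'a \<Rightarrow> bool" where
  "compact_open S a \<longleftrightarrow> a \<in> S \<and>
     (\<forall>X\<subseteq>S. a \<le> pjoin S X \<longrightarrow> (\<exists>F\<subseteq>X. finite F \<and> a \<le> pjoin S F))"

definition COpen :: "'a::order set \<Rightarrow> 'a set" where
  "COpen S = {a. compact_open S a}"

definition coherent :: "'a::order set \<Rightarrow> bool" where
  "coherent S \<longleftrightarrow> ptop S \<in> COpen S \<and>
     (\<forall>a\<in>COpen S. \<forall>b\<in>COpen S. pmeet2 S a b \<in> COpen S) \<and>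
     (\<forall>x\<in>S. \<exists>C\<subseteq>COpen S. x = pjoin S C)"

definition regular_frame :: "'a::order set \<Rightarrow> bool" where
  "regular_frame S \<longleftrightarrow> (\<forall>y\<in>S. y = pjoin S {x\<in>S. pjoin2 S (pneg S x) y = ptop S})"

definition extremally_disconnected :: "'a::order set \<Rightarrow> bool" where
  "extremally_disconnected S \<longleftrightarrow> (\<forall>x\<in>S. pjoin2 S (pneg S x) (pneg S (pneg S x)) = ptop S)"

definition stonean :: "'a::order set \<Rightarrow> bool" where
  "stonean S \<longleftrightarrow> frame S \<and> coherent S \<and> regular_frame S \<and> extremally_disconnected S"

definition directed_in :: "'a::order set \<Rightarrow> 'a set \<Rightarrow> bool" where
  "directed_in S D \<longleftrightarrow> D \<subseteq> S \<and> D \<noteq> {} \<and> (\<forall>a\<in>D. \<forall>b\<in>D. \<exists>c\<in>D. a \<le> c \<and> b \<le> c)"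

definition cont_valuation :: "'a::order set \<Rightarrow> ('a \<Rightarrow> real) \<Rightarrow> bool" where
  "cont_valuation S \<nu> \<longleftrightarrow> (\<forall>x\<in>S. 0 \<le> \<nu> x) \<and> \<nu> (pbot S) = 0 \<and>
     (\<forall>a\<in>S. \<forall>b\<in>S. \<nu> (pjoin2 S a b) + \<nu> (pmeet2 S a b) = \<nu> a + \<nu> b) \<and>
     (\<forall>a\<in>S. \<forall>b\<in>S. a \<le> b \<longrightarrow> \<nu> a \<le> \<nu> b) \<and>
     (\<forall>D. directed_in S D \<longrightarrow> \<nu> (pjoin S D) = (SUP d\<in>D. \<nu> d))"

definition normal_valuation :: "'a::order set \<Rightarrow> ('a \<Rightarrow> real) \<Rightarrow> bool" where
  "normal_valuation S \<nu> \<longleftrightarrow> (\<forall>a\<in>S. \<nu> (pneg S (pneg S a)) = \<nu> a)"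

definition hyperstonean :: "'a::order set \<Rightarrow> bool" where
  "hyperstonean S \<longleftrightarrow> stonean S \<and>
     (\<forall>a\<in>S. a \<noteq> pbot S \<longrightarrow> (\<exists>\<nu>. cont_valuation S \<nu> \<and> normal_valuation S \<nu> \<and> \<nu> a \<noteq> 0))"

definition bool_alg :: "'a::order set \<Rightarrow> bool" where
  "bool_alg A \<longleftrightarrow>
     (\<forall>a\<in>A. \<forall>b\<in>A. (\<exists>x. p_is_lub A {a, b} x) \<and> (\<exists>x. p_is_glb A {a, b} x)) \<and>
     (\<exists>x. p_is_lub A {} x) \<and> (\<exists>x. p_is_glb A {} x) \<and>
     (\<forall>a\<in>A. \<forall>b\<in>A. \<forall>c\<in>A. pmeet2 A a (pjoin2 A b c) = pjoin2 A (pmeet2 A a b) (pmeet2 A a c)) \<and>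
     (\<forall>a\<in>A. \<exists>b\<in>A. pmeet2 A a b = pbot A \<and> pjoin2 A a b = ptop A)"

definition complete_bool_alg :: "'a::order set \<Rightarrow> bool" where
  "complete_bool_alg A \<longleftrightarrow> bool_alg A \<and> complete_poset A"

definition localizable :: "'a::order set \<Rightarrow> bool" where
  "localizable A \<longleftrightarrow> complete_bool_alg A \<and>
     ptop A = pjoin A {a\<in>A. \<exists>\<nu>. cont_valuation {b\<in>A. b \<le> a} \<nu> \<and>
                                  (\<forall>b\<in>A. b \<le> a \<longrightarrow> \<nu> b = 0 \<longrightarrow> b = pbot A)}"

definition bool_hom_sup :: "'a::order set \<Rightarrow> 'b::order set \<Rightarrow> ('a \<Rightarrow> 'b) \<Rightarrow> bool" where
  "bool_hom_sup A B h \<longleftrightarrow> (\<forall>a\<in>A. h a \<in> B) \<and>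
     h (ptop A) = ptop B \<and> h (pbot A) = pbot B \<and>
     (\<forall>a\<in>A. \<forall>b\<in>A. h (pmeet2 A a b) = pmeet2 B (h a) (h b)) \<and>
     (\<forall>a\<in>A. \<forall>b\<in>A. h (pjoin2 A a b) = pjoin2 B (h a) (h b)) \<and>
     (\<forall>X\<subseteq>A. h (pjoin A X) = pjoin B (h ` X))"

definition lat_ideal :: "'a::order set \<Rightarrow> 'a set \<Rightarrow> bool" where
  "lat_ideal A I \<longleftrightarrow> I \<subseteq> A \<and> (\<forall>x\<in>I. \<forall>y\<in>A. y \<le> x \<longrightarrow> y \<in> I) \<and>
     pbot A \<in> I \<and> (\<forall>x\<in>I. \<forall>y\<in>I. pjoin2 A x y \<in> I)"

definition Idl :: "'a::order set \<Rightarrow> 'a set set" where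
  "Idl A = {I. lat_ideal A I}"

text \<open>Action of Ideal on a morphism h : A \<rightarrow> B: the frame map Idl A \<rightarrow> Idl B sending an
  ideal to the ideal generated by its image (this is f^* of the locale map Ideal(B) \<rightarrow> Ideal(A)).\<close>
definition ideal_map :: "'a::order set \<Rightarrow> 'b::order set \<Rightarrow> ('a \<Rightarrow> 'b) \<Rightarrow> 'a set \<Rightarrow> 'b set" where
  "ideal_map A B h I = \<Inter>{J\<in>Idl B. h ` I \<subseteq> J}"

end

(* A Stonean frame H is the frame of ideals of its compact opens: by coherence every element is the
   join of the compact opens below it, and compactness makes x |-> {c compact. c <= x} inverse to
   the join map. In a Stonean frame the compact opens are exactly the complemented elements; they
   form a complete Boolean algebra whose joins are double negations of joins in H. Conversely, the
   ideals of a complete Boolean algebra form a Stonean frame whose compact opens are the principal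
   ideals. Open frame maps preserve complements, hence restrict to supremum-preserving homomorphisms
   of compact opens; conversely such a homomorphism h has a left adjoint, which makes the induced
   map of ideals preserve arbitrary meets and Heyting implications. If a normal valuation nu were nonzero on the complement
   of the join t of the localizable compact opens, the complement of the join of the nu-null compact
   opens would be localizable (nu is faithful below it) and hence below t, and normality would give
   nu (not t) = 0. If l is localizable, witnessed by a faithful valuation mu below l, then
   I |-> mu (l meet join I) is a continuous normal valuation on ideals; these separate the nonzero
   ideals because the localizable elements join to top. *)

theory Submission
  imports Defs
begin

section \<open>Joins and meets relative to a carrier\<close>

lemma p_is_lub_unique: "p_is_lub S X x \<Longrightarrow> p_is_lub S X y \<Longrightarrow> x = y"
  unfolding p_is_lub_def by (meson order_antisym)

lemma p_is_glb_unique: "p_is_glb S X x \<Longrightarrow> p_is_glb S X y \<Longrightarrow> x = y"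
  unfolding p_is_glb_def by (meson order_antisym)

lemma pjoin_unique: "p_is_lub S X x \<Longrightarrow> pjoin S X = x"
  unfolding pjoin_def using p_is_lub_unique by (metis the_equality)

lemma pmeet_unique: "p_is_glb S X x \<Longrightarrow> pmeet S X = x"
  unfolding pmeet_def using p_is_glb_unique by (metis the_equality)

lemma p_is_lubI:
  "x \<in> S \<Longrightarrow> (\<And>y. y \<in> X \<Longrightarrow> y \<le> x) \<Longrightarrow> (\<And>z. z \<in> S \<Longrightarrow> \<forall>y\<in>X. y \<le> z \<Longrightarrow> x \<le> z) \<Longrightarrow>
    p_is_lub S X x"
  unfolding p_is_lub_def by blast

lemma p_is_glbI:
  "x \<in> S \<Longrightarrow> (\<And>y. y \<in> X \<Longrightarrow> x \<le> y) \<Longrightarrow> (\<And>z. z \<in> S \<Longrightarrow> \<forall>y\<in>X. z \<le> y \<Longrightarrow> z \<le> x) \<Longrightarrow>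
    p_is_glb S X x"
  unfolding p_is_glb_def by blast

lemma pjoin_eqI:
  "x \<in> S \<Longrightarrow> (\<And>y. y \<in> X \<Longrightarrow> y \<le> x) \<Longrightarrow> (\<And>z. z \<in> S \<Longrightarrow> \<forall>y\<in>X. y \<le> z \<Longrightarrow> x \<le> z) \<Longrightarrow>
    pjoin S X = x"
  by (rule pjoin_unique, rule p_is_lubI)

lemma pmeet_eqI:
  "x \<in> S \<Longrightarrow> (\<And>y. y \<in> X \<Longrightarrow> x \<le> y) \<Longrightarrow> (\<And>z. z \<in> S \<Longrightarrow> \<forall>y\<in>X. z \<le> y \<Longrightarrow> z \<le> x) \<Longrightarrow>
    pmeet S X = x"
  by (rule pmeet_unique, rule p_is_glbI)

lemma pjoin_eq_greatest: "x \<in> S \<Longrightarrow> x \<in> X \<Longrightarrow> (\<And>y. y \<in> X \<Longrightarrow> y \<le> x) \<Longrightarrow> pjoin S X = x"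
  by (rule pjoin_eqI) auto

lemma complete_poset_glb:
  assumes "complete_poset S" "X \<subseteq> S"
  shows "p_is_glb S X (pjoin S {z\<in>S. \<forall>y\<in>X. z \<le> y})"
proof -
  obtain x where x: "p_is_lub S {z\<in>S. \<forall>y\<in>X. z \<le> y} x"
    using assms unfolding complete_poset_def by (metis (no_types, lifting) mem_Collect_eq subsetI)
  hence "pjoin S {z\<in>S. \<forall>y\<in>X. z \<le> y} = x" by (rule pjoin_unique)
  thus ?thesis using x assms unfolding p_is_lub_def p_is_glb_def by blast
qed

locale complete_lattice_on =
  fixes S :: "'a::order set"
  assumes complete: "complete_poset S"
begin

lemma lub_pjoin: "X \<subseteq> S \<Longrightarrow> p_is_lub S X (pjoin S X)"
  using complete unfolding complete_poset_def by (metis pjoin_unique)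

lemma glb_pmeet: "X \<subseteq> S \<Longrightarrow> p_is_glb S X (pmeet S X)"
  using complete_poset_glb[OF complete] by (metis pmeet_unique)

lemma pjoin_closed: "X \<subseteq> S \<Longrightarrow> pjoin S X \<in> S"
  using lub_pjoin unfolding p_is_lub_def by blast
lemma pjoin_upper: "X \<subseteq> S \<Longrightarrow> x \<in> X \<Longrightarrow> x \<le> pjoin S X"
  using lub_pjoin unfolding p_is_lub_def by blast
lemma pjoin_least: "X \<subseteq> S \<Longrightarrow> z \<in> S \<Longrightarrow> (\<And>x. x \<in> X \<Longrightarrow> x \<le> z) \<Longrightarrow> pjoin S X \<le> z"
  using lub_pjoin unfolding p_is_lub_def by blast
lemma pjoin_le_iff: "X \<subseteq> S \<Longrightarrow> z \<in> S \<Longrightarrow> pjoin S X \<le> z \<longleftrightarrow> (\<forall>x\<in>X. x \<le> z)"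
  by (meson pjoin_least pjoin_upper order_trans)
lemma pjoin_mono: "X \<subseteq> Y \<Longrightarrow> Y \<subseteq> S \<Longrightarrow> pjoin S X \<le> pjoin S Y"
  by (meson pjoin_closed pjoin_least pjoin_upper subset_iff dual_order.trans)

lemma pmeet_closed: "X \<subseteq> S \<Longrightarrow> pmeet S X \<in> S"
  using glb_pmeet unfolding p_is_glb_def by blast
lemma pmeet_lower: "X \<subseteq> S \<Longrightarrow> x \<in> X \<Longrightarrow> pmeet S X \<le> x"
  using glb_pmeet unfolding p_is_glb_def by blast
lemma pmeet_greatest: "X \<subseteq> S \<Longrightarrow> z \<in> S \<Longrightarrow> (\<And>x. x \<in> X \<Longrightarrow> z \<le> x) \<Longrightarrow> z \<le> pmeet S X"
  using glb_pmeet unfolding p_is_glb_def by blast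
lemma le_pmeet_iff: "X \<subseteq> S \<Longrightarrow> z \<in> S \<Longrightarrow> z \<le> pmeet S X \<longleftrightarrow> (\<forall>x\<in>X. z \<le> x)"
  by (meson pmeet_greatest pmeet_lower order_trans)

lemma pjoin2_closed: "a \<in> S \<Longrightarrow> b \<in> S \<Longrightarrow> pjoin2 S a b \<in> S"
  unfolding pjoin2_def by (rule pjoin_closed) auto
lemma pjoin2_le_iff: "a \<in> S \<Longrightarrow> b \<in> S \<Longrightarrow> z \<in> S \<Longrightarrow> pjoin2 S a b \<le> z \<longleftrightarrow> a \<le> z \<and> b \<le> z"
  unfolding pjoin2_def by (subst pjoin_le_iff) auto
lemma pjoin2_upper1: "a \<in> S \<Longrightarrow> b \<in> S \<Longrightarrow> a \<le> pjoin2 S a b"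
  using pjoin2_le_iff pjoin2_closed by blast
lemma pjoin2_upper2: "a \<in> S \<Longrightarrow> b \<in> S \<Longrightarrow> b \<le> pjoin2 S a b"
  using pjoin2_le_iff pjoin2_closed by blast
lemma pmeet2_closed: "a \<in> S \<Longrightarrow> b \<in> S \<Longrightarrow> pmeet2 S a b \<in> S"
  unfolding pmeet2_def by (rule pmeet_closed) auto
lemma le_pmeet2_iff: "a \<in> S \<Longrightarrow> b \<in> S \<Longrightarrow> z \<in> S \<Longrightarrow> z \<le> pmeet2 S a b \<longleftrightarrow> z \<le> a \<and> z \<le> b"
  unfolding pmeet2_def by (subst le_pmeet_iff) auto
lemma pmeet2_lower1: "a \<in> S \<Longrightarrow> b \<in> S \<Longrightarrow> pmeet2 S a b \<le> a"
  using le_pmeet2_iff pmeet2_closed by blast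
lemma pmeet2_lower2: "a \<in> S \<Longrightarrow> b \<in> S \<Longrightarrow> pmeet2 S a b \<le> b"
  using le_pmeet2_iff pmeet2_closed by blast

lemma ptop_closed: "ptop S \<in> S"
  unfolding ptop_def by (rule pmeet_closed) auto
lemma le_ptop: "x \<in> S \<Longrightarrow> x \<le> ptop S"
  unfolding ptop_def by (rule pmeet_greatest) auto
lemma pbot_closed: "pbot S \<in> S"
  unfolding pbot_def by (rule pjoin_closed) auto
lemma pbot_le: "x \<in> S \<Longrightarrow> pbot S \<le> x"
  unfolding pbot_def by (rule pjoin_least) auto

lemma pmeet2_commute: "pmeet2 S a b = pmeet2 S b a"
  unfolding pmeet2_def by (simp add: insert_commute)
lemma pjoin2_commute: "pjoin2 S a b = pjoin2 S b a"
  unfolding pjoin2_def by (simp add: insert_commute)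

lemma pmeet2_mono:
  "a \<in> S \<Longrightarrow> b \<in> S \<Longrightarrow> c \<in> S \<Longrightarrow> d \<in> S \<Longrightarrow> a \<le> c \<Longrightarrow> b \<le> d \<Longrightarrow> pmeet2 S a b \<le> pmeet2 S c d"
  by (meson le_pmeet2_iff pmeet2_closed pmeet2_lower1 pmeet2_lower2 order_trans)
lemma pjoin2_mono:
  "a \<in> S \<Longrightarrow> b \<in> S \<Longrightarrow> c \<in> S \<Longrightarrow> d \<in> S \<Longrightarrow> a \<le> c \<Longrightarrow> b \<le> d \<Longrightarrow> pjoin2 S a b \<le> pjoin2 S c d"
  by (meson pjoin2_le_iff pjoin2_closed pjoin2_upper1 pjoin2_upper2 order_trans)

lemma pmeet2_absorb1: "a \<in> S \<Longrightarrow> b \<in> S \<Longrightarrow> a \<le> b \<Longrightarrow> pmeet2 S a b = a"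
  by (meson antisym le_pmeet2_iff pmeet2_closed pmeet2_lower1 order_refl)
lemma pmeet2_absorb2: "a \<in> S \<Longrightarrow> b \<in> S \<Longrightarrow> b \<le> a \<Longrightarrow> pmeet2 S a b = b"
  using pmeet2_absorb1 pmeet2_commute by metis
lemma pjoin2_absorb1: "a \<in> S \<Longrightarrow> b \<in> S \<Longrightarrow> b \<le> a \<Longrightarrow> pjoin2 S a b = a"
  by (meson antisym pjoin2_le_iff pjoin2_closed pjoin2_upper1 order_refl)
lemma pjoin2_absorb2: "a \<in> S \<Longrightarrow> b \<in> S \<Longrightarrow> a \<le> b \<Longrightarrow> pjoin2 S a b = b"
  using pjoin2_absorb1 pjoin2_commute by metis

lemma le_pbot_iff: "x \<in> S \<Longrightarrow> x \<le> pbot S \<longleftrightarrow> x = pbot S"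
  using pbot_le pbot_closed antisym by blast
lemma ptop_le_iff: "x \<in> S \<Longrightarrow> ptop S \<le> x \<longleftrightarrow> x = ptop S"
  using le_ptop ptop_closed antisym by blast

lemma pmeet2_pbot_left: "x \<in> S \<Longrightarrow> pmeet2 S (pbot S) x = pbot S"
  by (simp add: pbot_closed pbot_le pmeet2_absorb1)
lemma pmeet2_pbot_right: "x \<in> S \<Longrightarrow> pmeet2 S x (pbot S) = pbot S"
  by (simp add: pbot_closed pbot_le pmeet2_absorb2)
lemma pjoin2_pbot_left: "x \<in> S \<Longrightarrow> pjoin2 S (pbot S) x = x"
  by (simp add: pbot_closed pbot_le pjoin2_absorb2)
lemma pjoin2_pbot_right: "x \<in> S \<Longrightarrow> pjoin2 S x (pbot S) = x"
  by (simp add: pbot_closed pbot_le pjoin2_absorb1)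
lemma pmeet2_ptop_right: "x \<in> S \<Longrightarrow> pmeet2 S x (ptop S) = x"
  by (simp add: ptop_closed le_ptop pmeet2_absorb1)

lemma pmeet2_pmeet2_distrib:
  assumes "l \<in> S" "x \<in> S" "y \<in> S"
  shows "pmeet2 S l (pmeet2 S x y) = pmeet2 S (pmeet2 S l x) (pmeet2 S l y)"
proof -
  have "z \<le> pmeet2 S l (pmeet2 S x y) \<longleftrightarrow> z \<le> pmeet2 S (pmeet2 S l x) (pmeet2 S l y)" if "z \<in> S" for z
    using assms that by (auto simp: le_pmeet2_iff pmeet2_closed)
  thus ?thesis using assms pmeet2_closed by (metis antisym order_refl)
qed

lemma pjoin_empty: "pjoin S {} = pbot S"
  unfolding pbot_def ..

lemma pjoin_insert: "x \<in> S \<Longrightarrow> F \<subseteq> S \<Longrightarrow> pjoin S (insert x F) = pjoin2 S x (pjoin S F)"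
  apply (rule antisym)
   apply (rule pjoin_least; auto simp: pjoin2_closed pjoin_closed pjoin2_upper1)
   apply (meson pjoin_closed pjoin_upper pjoin2_closed pjoin2_upper2 order_trans)
  by (simp add: pjoin_closed pjoin_upper pjoin_mono pjoin2_le_iff subset_insertI)

lemma pjoin_Un: "X \<subseteq> S \<Longrightarrow> Y \<subseteq> S \<Longrightarrow> pjoin S (X \<union> Y) = pjoin2 S (pjoin S X) (pjoin S Y)"
  apply (rule antisym)
   apply (rule pjoin_least; auto simp: pjoin2_closed pjoin_closed)
    apply (meson pjoin_closed pjoin_upper pjoin2_closed pjoin2_upper1 order_trans)
   apply (meson pjoin_closed pjoin_upper pjoin2_closed pjoin2_upper2 order_trans)
  by (simp add: pjoin_closed pjoin_mono pjoin2_le_iff)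

lemma pjoin_subcarrier:
  assumes "T \<subseteq> S" "X \<subseteq> S" "pjoin S X \<in> T"
  shows "pjoin T X = pjoin S X"
  using assms lub_pjoin[OF assms(2)] unfolding p_is_lub_def by (intro pjoin_eqI) auto

lemma pmeet_subcarrier:
  assumes "T \<subseteq> S" "X \<subseteq> S" "pmeet S X \<in> T"
  shows "pmeet T X = pmeet S X"
  using assms glb_pmeet[OF assms(2)] unfolding p_is_glb_def by (intro pmeet_eqI) auto

lemma pjoin2_subcarrier:
  "T \<subseteq> S \<Longrightarrow> a \<in> S \<Longrightarrow> b \<in> S \<Longrightarrow> pjoin2 S a b \<in> T \<Longrightarrow> pjoin2 T a b = pjoin2 S a b"
  unfolding pjoin2_def by (rule pjoin_subcarrier) auto

lemma pmeet2_subcarrier: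
  "T \<subseteq> S \<Longrightarrow> a \<in> S \<Longrightarrow> b \<in> S \<Longrightarrow> pmeet2 S a b \<in> T \<Longrightarrow> pmeet2 T a b = pmeet2 S a b"
  unfolding pmeet2_def by (rule pmeet_subcarrier) auto

lemma pbot_subcarrier: "T \<subseteq> S \<Longrightarrow> pbot S \<in> T \<Longrightarrow> pbot T = pbot S"
  unfolding pbot_def by (rule pjoin_subcarrier) auto

lemma ptop_subcarrier: "T \<subseteq> S \<Longrightarrow> ptop S \<in> T \<Longrightarrow> ptop T = ptop S"
  unfolding ptop_def by (rule pmeet_subcarrier) auto

end

section \<open>Frames and complete Boolean algebras\<close>

locale frame_on = complete_lattice_on +
  assumes pmeet2_pjoin_distrib:
    "a \<in> S \<Longrightarrow> X \<subseteq> S \<Longrightarrow> pmeet2 S a (pjoin S X) = pjoin S ((\<lambda>x. pmeet2 S a x) ` X)"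
begin

lemma pmeet2_pjoin2_distrib:
  "a \<in> S \<Longrightarrow> b \<in> S \<Longrightarrow> c \<in> S \<Longrightarrow>
    pmeet2 S a (pjoin2 S b c) = pjoin2 S (pmeet2 S a b) (pmeet2 S a c)"
  unfolding pjoin2_def[of S b c] using pmeet2_pjoin_distrib[of a "{b,c}"] by (simp add: pjoin2_def)

lemma pmeet2_idem: "a \<in> S \<Longrightarrow> pmeet2 S a a = a" using pmeet2_absorb1 by auto

lemma le_himp_iff:
  assumes "w \<in> S" "x \<in> S" "y \<in> S"
  shows "w \<le> himp S x y \<longleftrightarrow> pmeet2 S w x \<le> y"
proof
  let ?W = "{w\<in>S. pmeet2 S w x \<le> y}"
  have WS: "?W \<subseteq> S" by auto
  have JW: "pjoin S ?W \<in> S" using pjoin_closed WS by blast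
  assume "w \<le> himp S x y"
  hence "w \<le> pjoin S ?W" unfolding himp_def .
  hence "pmeet2 S w x \<le> pmeet2 S (pjoin S ?W) x"
    using assms JW by (intro pmeet2_mono) auto
  also have "\<dots> = pmeet2 S x (pjoin S ?W)" by (rule pmeet2_commute)
  also have "\<dots> = pjoin S ((\<lambda>v. pmeet2 S x v) ` ?W)" using pmeet2_pjoin_distrib assms WS by blast
  also have "\<dots> \<le> y"
  proof (rule pjoin_least)
    show "(\<lambda>v. pmeet2 S x v) ` ?W \<subseteq> S" using assms pmeet2_closed by auto
    show "y \<in> S" by fact
    fix z assume "z \<in> (\<lambda>v. pmeet2 S x v) ` ?W"
    then obtain v where "v \<in> ?W" "z = pmeet2 S x v" by blast
    thus "z \<le> y" using pmeet2_commute[of x v] by simp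
  qed
  finally show "pmeet2 S w x \<le> y" .
next
  assume "pmeet2 S w x \<le> y"
  thus "w \<le> himp S x y" unfolding himp_def using assms by (intro pjoin_upper) auto
qed

lemma himp_closed: "himp S x y \<in> S" unfolding himp_def by (rule pjoin_closed) auto

lemma pneg_closed: "pneg S x \<in> S" unfolding pneg_def by (rule himp_closed)

lemma le_pneg_iff: "w \<in> S \<Longrightarrow> x \<in> S \<Longrightarrow> w \<le> pneg S x \<longleftrightarrow> pmeet2 S w x = pbot S"
  unfolding pneg_def by (simp add: le_himp_iff pbot_closed le_pbot_iff pmeet2_closed)

lemma pmeet2_pneg_left: "x \<in> S \<Longrightarrow> pmeet2 S (pneg S x) x = pbot S"
  using le_pneg_iff pneg_closed by blast
lemma pmeet2_pneg_right: "x \<in> S \<Longrightarrow> pmeet2 S x (pneg S x) = pbot S"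
  using pmeet2_pneg_left pmeet2_commute by metis

lemma pneg_antimono: "x \<in> S \<Longrightarrow> y \<in> S \<Longrightarrow> x \<le> y \<Longrightarrow> pneg S y \<le> pneg S x"
proof -
  assume a: "x \<in> S" "y \<in> S" "x \<le> y"
  have "pmeet2 S (pneg S y) x \<le> pmeet2 S (pneg S y) y"
    using a pneg_closed by (intro pmeet2_mono) auto
  also have "\<dots> = pbot S" using pmeet2_pneg_left a by blast
  finally show ?thesis using a le_pneg_iff pneg_closed le_pbot_iff pmeet2_closed by blast
qed

lemma le_pneg_pneg: "x \<in> S \<Longrightarrow> x \<le> pneg S (pneg S x)"
  using le_pneg_iff pneg_closed pmeet2_pneg_right by blast

lemma pneg_pbot: "pneg S (pbot S) = ptop S"
proof -
  have "pmeet2 S (ptop S) (pbot S) = pbot S"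
    using pmeet2_lower2 ptop_closed pbot_closed le_pbot_iff pmeet2_closed by blast
  hence "ptop S \<le> pneg S (pbot S)" using le_pneg_iff ptop_closed pbot_closed by blast
  thus ?thesis using pneg_closed ptop_le_iff by blast
qed

lemma pmeet2_ne_pbot_if_pjoin_ptop:
  assumes L: "L \<subseteq> S" "pjoin S L = ptop S" and a: "a \<in> S" "a \<noteq> pbot S"
  shows "\<exists>l\<in>L. pmeet2 S l a \<noteq> pbot S"
proof (rule ccontr)
  assume "\<not> ?thesis"
  hence "\<forall>y\<in>(\<lambda>l. pmeet2 S a l) ` L. y \<le> pbot S"
    using pmeet2_commute[of _ a] pbot_closed by auto
  moreover have "a = pjoin S ((\<lambda>l. pmeet2 S a l) ` L)"
    using pmeet2_ptop_right[OF a(1)] L pmeet2_pjoin_distrib a(1) by metis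
  ultimately have "a \<le> pbot S" using pjoin_least pmeet2_closed a(1) L(1) pbot_closed
    by (metis (no_types, lifting) image_subset_iff subsetD)
  thus False using a le_pbot_iff by blast
qed

definition complemented :: "'a \<Rightarrow> bool" where
  "complemented c \<longleftrightarrow> c \<in> S \<and> (\<exists>d\<in>S. pmeet2 S c d = pbot S \<and> pjoin2 S c d = ptop S)"

lemma complement_eq_pneg:
  assumes "c \<in> S" "d \<in> S" "pmeet2 S c d = pbot S" "pjoin2 S c d = ptop S"
  shows "d = pneg S c"
proof (rule antisym)
  show "d \<le> pneg S c" using assms le_pneg_iff pmeet2_commute by metis
  have "pneg S c = pmeet2 S (pneg S c) (pjoin2 S c d)"
    using assms pmeet2_ptop_right pneg_closed by simp
  also have "\<dots> = pjoin2 S (pmeet2 S (pneg S c) c) (pmeet2 S (pneg S c) d)"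
    using pmeet2_pjoin2_distrib assms pneg_closed by blast
  also have "\<dots> = pmeet2 S (pneg S c) d"
    using pmeet2_pneg_left assms pjoin2_pbot_left pmeet2_closed pneg_closed by simp
  also have "\<dots> \<le> d" using pmeet2_lower2 assms pneg_closed by blast
  finally show "pneg S c \<le> d" .
qed

lemma complemented_pneg_pneg:
  assumes "complemented c"
  shows "pneg S (pneg S c) = c"
proof -
  obtain d where d: "c \<in> S" "d \<in> S" "pmeet2 S c d = pbot S" "pjoin2 S c d = ptop S"
    using assms unfolding complemented_def by blast
  have 1: "d = pneg S c" using complement_eq_pneg d by blast
  have "c = pneg S d" using complement_eq_pneg[of d c] d pmeet2_commute pjoin2_commute by metis
  thus ?thesis using 1 by simp
qed

lemma complemented_pjoin2_pneg: "complemented c \<Longrightarrow> pjoin2 S c (pneg S c) = ptop S"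
  unfolding complemented_def using complement_eq_pneg by blast

end

lemma frame_imp_frame_on: "frame S \<Longrightarrow> frame_on S"
  unfolding frame_def frame_on_def frame_on_axioms_def complete_lattice_on_def by blast

lemma frame_on_imp_frame: "frame_on S \<Longrightarrow> frame S"
  unfolding frame_def frame_on_def frame_on_axioms_def complete_lattice_on_def by blast

locale cba_on = complete_lattice_on +
  assumes cba_distrib: "a \<in> S \<Longrightarrow> b \<in> S \<Longrightarrow> c \<in> S \<Longrightarrow>
      pmeet2 S a (pjoin2 S b c) = pjoin2 S (pmeet2 S a b) (pmeet2 S a c)"
    and cba_complement: "a \<in> S \<Longrightarrow> \<exists>b\<in>S. pmeet2 S a b = pbot S \<and> pjoin2 S a b = ptop S"

lemma complete_bool_alg_iff_cba_on: "complete_bool_alg S \<longleftrightarrow> cba_on S"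
proof
  assume "complete_bool_alg S" thus "cba_on S"
    unfolding complete_bool_alg_def bool_alg_def cba_on_def cba_on_axioms_def complete_lattice_on_def
    by blast
next
  assume c: "cba_on S"
  then interpret cba_on S .
  have "p_is_lub S {a,b} (pjoin2 S a b)" if "a \<in> S" "b \<in> S" for a b
    unfolding pjoin2_def using that by (intro lub_pjoin) auto
  moreover have "p_is_glb S {a,b} (pmeet2 S a b)" if "a \<in> S" "b \<in> S" for a b
    unfolding pmeet2_def using that by (intro glb_pmeet) auto
  moreover have "p_is_lub S {} (pbot S)" unfolding pbot_def by (intro lub_pjoin) auto
  moreover have "p_is_glb S {} (ptop S)" unfolding ptop_def by (intro glb_pmeet) auto
  ultimately show "complete_bool_alg S"
    unfolding complete_bool_alg_def bool_alg_def using complete cba_distrib cba_complement by blast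
qed

context cba_on
begin

lemma pmeet2_le_iff_le_pjoin2_complement:
  assumes a: "a \<in> S" "na \<in> S" "pmeet2 S a na = pbot S" "pjoin2 S a na = ptop S"
    and xy: "x \<in> S" "y \<in> S"
  shows "pmeet2 S a x \<le> y \<longleftrightarrow> x \<le> pjoin2 S y na"
proof
  assume le: "pmeet2 S a x \<le> y"
  have "x = pmeet2 S x (pjoin2 S a na)" using a xy pmeet2_ptop_right by simp
  also have "\<dots> = pjoin2 S (pmeet2 S x a) (pmeet2 S x na)" using cba_distrib a xy by blast
  also have "\<dots> \<le> pjoin2 S y na"
    using le a xy pmeet2_commute[of x a]
      by (intro pjoin2_mono) (auto simp: pmeet2_closed pmeet2_lower2)
  finally show "x \<le> pjoin2 S y na" .
next
  assume "x \<le> pjoin2 S y na"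
  hence "pmeet2 S a x \<le> pmeet2 S a (pjoin2 S y na)"
    using a xy pjoin2_closed by (intro pmeet2_mono) auto
  also have "\<dots> = pjoin2 S (pmeet2 S a y) (pmeet2 S a na)" using cba_distrib a xy by blast
  also have "\<dots> = pmeet2 S a y" using a xy pjoin2_pbot_right pmeet2_closed by simp
  also have "\<dots> \<le> y" using pmeet2_lower2 a xy by blast
  finally show "pmeet2 S a x \<le> y" .
qed

text \<open>Meeting with a complemented element has the right adjoint y \<mapsto> y \<squnion> \<not>a, so it preserves
  all joins.\<close>

lemma cba_on_frame_on: "frame_on S"
proof unfold_locales
  fix a X assume a: "a \<in> S" and X: "X \<subseteq> S"
  obtain na where na: "na \<in> S" "pmeet2 S a na = pbot S" "pjoin2 S a na = ptop S"
    using cba_complement a by blast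
  note shunt = pmeet2_le_iff_le_pjoin2_complement[OF a na]
  let ?u = "pjoin S ((\<lambda>x. pmeet2 S a x) ` X)"
  have YS: "(\<lambda>x. pmeet2 S a x) ` X \<subseteq> S" using X a pmeet2_closed by auto
  have u: "?u \<in> S" using pjoin_closed YS .
  show "pmeet2 S a (pjoin S X) = ?u"
  proof (rule antisym)
    have "x \<le> pjoin2 S ?u na" if "x \<in> X" for x
      using that X YS u shunt pjoin_upper[OF YS] by blast
    hence "pjoin S X \<le> pjoin2 S ?u na" using pjoin_least X pjoin2_closed u na by blast
    thus "pmeet2 S a (pjoin S X) \<le> ?u" using shunt pjoin_closed X u by blast
    show "?u \<le> pmeet2 S a (pjoin S X)"
      using X a pjoin_closed pmeet2_closed pjoin_upper
      by (intro pjoin_least[OF YS]) (auto intro!: pmeet2_mono)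
  qed
qed

sublocale frame_on S by (rule cba_on_frame_on)

lemma complemented_all: "a \<in> S \<Longrightarrow> complemented a"
  unfolding complemented_def using cba_complement by blast

lemma pneg_pneg: "a \<in> S \<Longrightarrow> pneg S (pneg S a) = a"
  using complemented_all complemented_pneg_pneg by blast

lemma pjoin2_pneg: "a \<in> S \<Longrightarrow> pjoin2 S a (pneg S a) = ptop S"
  using complemented_all complemented_pjoin2_pneg by blast

end

section \<open>Open frame homomorphisms and order isomorphisms\<close>

lemma open_frame_homD:
  assumes "open_frame_hom S T f"
  shows "\<And>x. x \<in> S \<Longrightarrow> f x \<in> T" "f (ptop S) = ptop T"
    "\<And>a b. a \<in> S \<Longrightarrow> b \<in> S \<Longrightarrow> f (pmeet2 S a b) = pmeet2 T (f a) (f b)"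
    "\<And>X. X \<subseteq> S \<Longrightarrow> f (pjoin S X) = pjoin T (f ` X)"
    "\<And>X. X \<subseteq> S \<Longrightarrow> f (pmeet S X) = pmeet T (f ` X)"
    "\<And>a b. a \<in> S \<Longrightarrow> b \<in> S \<Longrightarrow> f (himp S a b) = himp T (f a) (f b)"
  using assms unfolding open_frame_hom_def frame_hom_def by simp_all

lemma open_frame_homI:
  assumes "\<And>x. x \<in> S \<Longrightarrow> f x \<in> T" "f (ptop S) = ptop T"
    "\<And>a b. a \<in> S \<Longrightarrow> b \<in> S \<Longrightarrow> f (pmeet2 S a b) = pmeet2 T (f a) (f b)"
    "\<And>X. X \<subseteq> S \<Longrightarrow> f (pjoin S X) = pjoin T (f ` X)"
    "\<And>X. X \<subseteq> S \<Longrightarrow> f (pmeet S X) = pmeet T (f ` X)"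
    "\<And>a b. a \<in> S \<Longrightarrow> b \<in> S \<Longrightarrow> f (himp S a b) = himp T (f a) (f b)"
  shows "open_frame_hom S T f"
  using assms unfolding open_frame_hom_def frame_hom_def by simp

lemma open_frame_hom_pbot: "open_frame_hom S T f \<Longrightarrow> f (pbot S) = pbot T"
  unfolding pbot_def using open_frame_homD(4)[of S T f "{}"] by simp

lemma open_frame_hom_pjoin2:
  "open_frame_hom S T f \<Longrightarrow> a \<in> S \<Longrightarrow> b \<in> S \<Longrightarrow> f (pjoin2 S a b) = pjoin2 T (f a) (f b)"
  unfolding pjoin2_def using open_frame_homD(4)[of S T f "{a, b}"] by simp

lemma (in frame_on) open_frame_hom_pneg:
  "open_frame_hom S T f \<Longrightarrow> x \<in> S \<Longrightarrow> f (pneg S x) = pneg T (f x)"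
  unfolding pneg_def using open_frame_homD(6) open_frame_hom_pbot pbot_closed by metis

definition order_iso_on :: "'a::order set \<Rightarrow> 'b::order set \<Rightarrow> ('a \<Rightarrow> 'b) \<Rightarrow> bool" where
  "order_iso_on S T f \<longleftrightarrow> bij_betw f S T \<and> (\<forall>x\<in>S. \<forall>y\<in>S. f x \<le> f y \<longleftrightarrow> x \<le> y)"

lemma order_iso_onD:
  assumes "order_iso_on S T f"
  shows "T = f ` S" "\<And>x y. x \<in> S \<Longrightarrow> y \<in> S \<Longrightarrow> f x \<le> f y \<longleftrightarrow> x \<le> y"
  using assms unfolding order_iso_on_def bij_betw_def by auto

lemma order_iso_p_is_lub:
  assumes o: "order_iso_on S T f" and X: "X \<subseteq> S" and x: "p_is_lub S X x"
  shows "p_is_lub T (f ` X) (f x)"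
proof (rule p_is_lubI)
  note T = order_iso_onD(1)[OF o] and le = order_iso_onD(2)[OF o]
  have xS: "x \<in> S" using x unfolding p_is_lub_def by blast
  show "f x \<in> T" using xS T by auto
  show "y \<le> f x" if "y \<in> f ` X" for y using that x le X xS unfolding p_is_lub_def by auto
  fix z assume z: "z \<in> T" "\<forall>y\<in>f ` X. y \<le> z"
  then obtain z' where z': "z' \<in> S" "z = f z'" using T by auto
  hence "\<forall>y\<in>X. y \<le> z'" using z le X by auto
  thus "f x \<le> z" using x z' le xS unfolding p_is_lub_def by auto
qed

lemma order_iso_p_is_glb:
  assumes o: "order_iso_on S T f" and X: "X \<subseteq> S" and x: "p_is_glb S X x"
  shows "p_is_glb T (f ` X) (f x)"
proof (rule p_is_glbI)
  note T = order_iso_onD(1)[OF o] and le = order_iso_onD(2)[OF o]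
  have xS: "x \<in> S" using x unfolding p_is_glb_def by blast
  show "f x \<in> T" using xS T by auto
  show "f x \<le> y" if "y \<in> f ` X" for y using that x le X xS unfolding p_is_glb_def by auto
  fix z assume z: "z \<in> T" "\<forall>y\<in>f ` X. z \<le> y"
  then obtain z' where z': "z' \<in> S" "z = f z'" using T by auto
  hence "\<forall>y\<in>X. z' \<le> y" using z le X by auto
  thus "z \<le> f x" using x z' le xS unfolding p_is_glb_def by auto
qed

context complete_lattice_on
begin

lemma order_iso_complete_poset: "order_iso_on S T f \<Longrightarrow> complete_poset T"
  unfolding complete_poset_def
proof (intro allI impI)
  fix Y assume o: "order_iso_on S T f" and Y: "Y \<subseteq> T"
  define X where "X = {x\<in>S. f x \<in> Y}"
  have XS: "X \<subseteq> S" and YX: "Y = f ` X"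
    using Y order_iso_onD(1)[OF o] unfolding X_def by auto
  show "\<exists>x. p_is_lub T Y x" unfolding YX using order_iso_p_is_lub[OF o XS lub_pjoin[OF XS]] by blast
qed

lemma order_iso_pjoin: "order_iso_on S T f \<Longrightarrow> X \<subseteq> S \<Longrightarrow> f (pjoin S X) = pjoin T (f ` X)"
  using order_iso_p_is_lub lub_pjoin pjoin_unique by metis

lemma order_iso_pmeet: "order_iso_on S T f \<Longrightarrow> X \<subseteq> S \<Longrightarrow> f (pmeet S X) = pmeet T (f ` X)"
  using order_iso_p_is_glb glb_pmeet pmeet_unique by metis

lemma order_iso_pmeet2:
  "order_iso_on S T f \<Longrightarrow> a \<in> S \<Longrightarrow> b \<in> S \<Longrightarrow> f (pmeet2 S a b) = pmeet2 T (f a) (f b)"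
  unfolding pmeet2_def using order_iso_pmeet[of T f "{a, b}"] by simp

lemma order_iso_himp:
  assumes o: "order_iso_on S T f" and ab: "a \<in> S" "b \<in> S"
  shows "f (himp S a b) = himp T (f a) (f b)"
proof -
  note T = order_iso_onD(1)[OF o] and le = order_iso_onD(2)[OF o]
  have iff: "pmeet2 T (f w) (f a) \<le> f b \<longleftrightarrow> pmeet2 S w a \<le> b" if w: "w \<in> S" for w
    using le[OF pmeet2_closed[OF w ab(1)] ab(2)] order_iso_pmeet2[OF o w ab(1)] by simp
  have "f ` {w\<in>S. pmeet2 S w a \<le> b} = {w\<in>T. pmeet2 T w (f a) \<le> f b}"
  proof (intro set_eqI iffI)
    fix w assume "w \<in> {w\<in>T. pmeet2 T w (f a) \<le> f b}"
    then obtain v where "v \<in> S" "w = f v" "pmeet2 T (f v) (f a) \<le> f b" using T by auto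
    thus "w \<in> f ` {w\<in>S. pmeet2 S w a \<le> b}" using iff by blast
  qed (use T iff in auto)
  thus ?thesis unfolding himp_def using order_iso_pjoin[OF o, of "{w\<in>S. pmeet2 S w a \<le> b}"] by auto
qed

lemma order_iso_open_frame_hom:
  assumes o: "order_iso_on S T f"
  shows "open_frame_hom S T f"
proof (rule open_frame_homI)
  show "f (ptop S) = ptop T" unfolding ptop_def using order_iso_pmeet[OF o, of "{}"] by simp
  show "f x \<in> T" if "x \<in> S" for x using that order_iso_onD(1)[OF o] by blast
qed (simp_all add: order_iso_pjoin[OF o] order_iso_pmeet[OF o] order_iso_pmeet2[OF o]
      order_iso_himp[OF o])

lemma order_iso_bool_hom_sup:
  assumes o: "order_iso_on S T f"
  shows "bool_hom_sup S T f"
  unfolding bool_hom_sup_def pmeet2_def pjoin2_def ptop_def pbot_def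
proof (intro conjI ballI allI impI)
  show "f x \<in> T" if "x \<in> S" for x using that order_iso_onD(1)[OF o] by blast
qed (simp_all add: order_iso_pjoin[OF o] order_iso_pmeet[OF o])

end

lemma order_iso_inverse:
  assumes o: "order_iso_on S T f" and g: "\<And>x. x \<in> S \<Longrightarrow> g (f x) = x"
  shows "order_iso_on T S g"
proof -
  note T = order_iso_onD(1)[OF o] and le = order_iso_onD(2)[OF o]
  have "inj_on g T" unfolding T inj_on_def using g by auto
  moreover have "g ` T = S" unfolding T using g by force
  moreover have "\<forall>x\<in>T. \<forall>y\<in>T. g x \<le> g y \<longleftrightarrow> x \<le> y" unfolding T using g le by auto
  ultimately show ?thesis unfolding order_iso_on_def bij_betw_def by blast
qed

lemma open_frame_hom_comp:
  assumes f: "open_frame_hom S T f" and g: "open_frame_hom T U g"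
  shows "open_frame_hom S U (\<lambda>x. g (f x))"
proof -
  note f1 = open_frame_homD[OF f] and g1 = open_frame_homD[OF g]
  have fX: "\<And>X. X \<subseteq> S \<Longrightarrow> f ` X \<subseteq> T" using f1(1) by blast
  have im: "\<And>X. (\<lambda>x. g (f x)) ` X = g ` (f ` X)" by auto
  show ?thesis
  proof (rule open_frame_homI)
    show "\<And>x. x \<in> S \<Longrightarrow> g (f x) \<in> U" using f1 g1 by blast
    show "g (f (ptop S)) = ptop U" using f1 g1 by simp
    show "\<And>a b. a \<in> S \<Longrightarrow> b \<in> S \<Longrightarrow> g (f (pmeet2 S a b)) = pmeet2 U (g (f a)) (g (f b))"
      using f1 g1 by simp
    show "\<And>X. X \<subseteq> S \<Longrightarrow> g (f (pjoin S X)) = pjoin U ((\<lambda>x. g (f x)) ` X)"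
      using f1 g1 fX im by simp
    show "\<And>X. X \<subseteq> S \<Longrightarrow> g (f (pmeet S X)) = pmeet U ((\<lambda>x. g (f x)) ` X)"
      using f1 g1 fX im by simp
    show "\<And>a b. a \<in> S \<Longrightarrow> b \<in> S \<Longrightarrow> g (f (himp S a b)) = himp U (g (f a)) (g (f b))"
      using f1 g1 by simp
  qed
qed

section \<open>Compact elements and coherent frames\<close>

context complete_lattice_on
begin

lemma finite_pjoin_le_member:
  assumes D: "D \<subseteq> S" "D \<noteq> {}" and D_join: "\<And>a b. a \<in> D \<Longrightarrow> b \<in> D \<Longrightarrow> pjoin2 S a b \<in> D"
    and F: "finite F" "F \<subseteq> D"
  shows "\<exists>d\<in>D. pjoin S F \<le> d"
  using F
proof (induction F rule: finite_induct)
  case empty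
  obtain d where "d \<in> D" using D by blast
  thus ?case using D pbot_le pjoin_empty by auto
next
  case (insert x F)
  then obtain d where d: "d \<in> D" "pjoin S F \<le> d" by blast
  have xS: "x \<in> S" and FS: "F \<subseteq> S" using insert D by auto
  have "pjoin S (insert x F) = pjoin2 S x (pjoin S F)" using pjoin_insert xS FS by blast
  also have "\<dots> \<le> pjoin2 S x d" using d D xS pjoin_closed[OF FS] by (intro pjoin2_mono) auto
  finally show ?case using D_join insert d by blast
qed

lemma compact_open_le_member:
  assumes c: "compact_open S c" and D: "D \<subseteq> S" "D \<noteq> {}"
    and D_join: "\<And>a b. a \<in> D \<Longrightarrow> b \<in> D \<Longrightarrow> pjoin2 S a b \<in> D"
    and le: "c \<le> pjoin S D"
  shows "\<exists>d\<in>D. c \<le> d"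
proof -
  obtain F where F: "F \<subseteq> D" "finite F" "c \<le> pjoin S F"
    using c D le unfolding compact_open_def by blast
  obtain d where "d \<in> D" "pjoin S F \<le> d" using finite_pjoin_le_member[OF D D_join F(2,1)] by blast
  thus ?thesis using F order_trans by blast
qed

lemma compact_open_pbot: "compact_open S (pbot S)"
  unfolding compact_open_def
proof (intro conjI allI impI pbot_closed)
  show "\<exists>F\<subseteq>X. finite F \<and> pbot S \<le> pjoin S F" for X
    using pjoin_empty by (intro exI[of _ "{}"]) auto
qed

lemma compact_open_pjoin2:
  assumes "compact_open S a" "compact_open S b"
  shows "compact_open S (pjoin2 S a b)"
proof -
  have aS: "a \<in> S" and bS: "b \<in> S" using assms unfolding compact_open_def by auto
  have "\<exists>F\<subseteq>X. finite F \<and> pjoin2 S a b \<le> pjoin S F"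
    if X: "X \<subseteq> S" "pjoin2 S a b \<le> pjoin S X" for X
  proof -
    have "a \<le> pjoin S X" "b \<le> pjoin S X" using X pjoin2_le_iff[OF aS bS pjoin_closed] by blast+
    then obtain F1 F2 where F1: "F1 \<subseteq> X" "finite F1" "a \<le> pjoin S F1"
      and F2: "F2 \<subseteq> X" "finite F2" "b \<le> pjoin S F2"
      using assms X(1) unfolding compact_open_def by meson
    have U: "F1 \<union> F2 \<subseteq> S" using F1 F2 X by blast
    have "a \<le> pjoin S (F1 \<union> F2)" "b \<le> pjoin S (F1 \<union> F2)"
      using F1 F2 pjoin_mono[OF _ U] order_trans by blast+
    hence "pjoin2 S a b \<le> pjoin S (F1 \<union> F2)"
      using pjoin2_le_iff[OF aS bS pjoin_closed[OF U]] by blast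
    thus ?thesis using F1 F2 by (intro exI[of _ "F1 \<union> F2"]) auto
  qed
  thus ?thesis unfolding compact_open_def using pjoin2_closed aS bS by blast
qed

end

context frame_on
begin

lemma pneg_complementedI:
  "x \<in> S \<Longrightarrow> pjoin2 S (pneg S x) (pneg S (pneg S x)) = ptop S \<Longrightarrow> complemented (pneg S x)"
  unfolding complemented_def
  by (intro conjI bexI[of _ "pneg S (pneg S x)"]) (auto simp: pneg_closed pmeet2_pneg_right)

lemma le_of_disjoint_cover:
  assumes "c \<in> S" "d \<in> S" "y \<in> S" "pmeet2 S c d = pbot S" "pjoin2 S d y = ptop S"
  shows "c \<le> y"
proof -
  have "c = pmeet2 S c (pjoin2 S d y)" using assms pmeet2_ptop_right by simp
  also have "\<dots> = pjoin2 S (pmeet2 S c d) (pmeet2 S c y)" using assms pmeet2_pjoin2_distrib by blast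
  also have "\<dots> = pmeet2 S c y" using assms pjoin2_pbot_left pmeet2_closed by simp
  also have "\<dots> \<le> y" using assms pmeet2_lower2 by blast
  finally show ?thesis .
qed

lemma pmeet2_pneg_le_pneg_pjoin2:
  assumes "x \<in> S" "y \<in> S"
  shows "pmeet2 S (pneg S x) (pneg S y) \<le> pneg S (pjoin2 S x y)"
proof -
  let ?w = "pmeet2 S (pneg S x) (pneg S y)"
  have w: "?w \<in> S" using pmeet2_closed pneg_closed by blast
  have "pmeet2 S ?w x \<le> pmeet2 S (pneg S x) x" "pmeet2 S ?w y \<le> pmeet2 S (pneg S y) y"
    using w assms pneg_closed pmeet2_lower1 pmeet2_lower2 by (auto intro!: pmeet2_mono)
  hence "pmeet2 S ?w x = pbot S" "pmeet2 S ?w y = pbot S"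
    using pmeet2_pneg_left assms le_pbot_iff pmeet2_closed w by auto
  hence "pmeet2 S ?w (pjoin2 S x y) = pbot S"
    using pmeet2_pjoin2_distrib w assms pjoin2_pbot_left pbot_closed by simp
  thus ?thesis using le_pneg_iff w pjoin2_closed assms by blast
qed

lemma pmeet2_pjoin2_le_pjoin2_pmeet2:
  assumes "a \<in> S" "b \<in> S" "c \<in> S"
  shows "pmeet2 S (pjoin2 S a c) (pjoin2 S b c) \<le> pjoin2 S (pmeet2 S a b) c"
proof -
  have "pmeet2 S (pjoin2 S a c) (pjoin2 S b c) =
      pjoin2 S (pmeet2 S (pjoin2 S a c) b) (pmeet2 S (pjoin2 S a c) c)"
    using pmeet2_pjoin2_distrib assms pjoin2_closed by blast
  also have "pmeet2 S (pjoin2 S a c) b = pjoin2 S (pmeet2 S b a) (pmeet2 S b c)"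
    using pmeet2_commute pmeet2_pjoin2_distrib assms by metis
  also have "pjoin2 S (pjoin2 S (pmeet2 S b a) (pmeet2 S b c)) (pmeet2 S (pjoin2 S a c) c)
      \<le> pjoin2 S (pmeet2 S a b) c"
    using assms pmeet2_commute[of b a]
    by (simp add: pjoin2_le_iff pjoin2_closed pmeet2_closed pjoin2_upper1
        order_trans[OF pmeet2_lower2 pjoin2_upper2])
  finally show ?thesis .
qed

text \<open>x is well inside c when \<not>x \<squnion> c = \<top>.\<close>

lemma well_inside_pjoin2:
  assumes xy: "x \<in> S" "y \<in> S" and c: "c \<in> S"
    and "pjoin2 S (pneg S x) c = ptop S" "pjoin2 S (pneg S y) c = ptop S"
  shows "pjoin2 S (pneg S (pjoin2 S x y)) c = ptop S"
proof -
  have "ptop S = pmeet2 S (pjoin2 S (pneg S x) c) (pjoin2 S (pneg S y) c)"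
    using assms pmeet2_ptop_right ptop_closed by simp
  also have "\<dots> \<le> pjoin2 S (pmeet2 S (pneg S x) (pneg S y)) c"
    using pmeet2_pjoin2_le_pjoin2_pmeet2 pneg_closed c by blast
  also have "\<dots> \<le> pjoin2 S (pneg S (pjoin2 S x y)) c"
    using pmeet2_pneg_le_pneg_pjoin2[OF xy] c pneg_closed pmeet2_closed by (intro pjoin2_mono) auto
  finally show ?thesis using ptop_le_iff pjoin2_closed pneg_closed c by blast
qed

end

lemma lat_idealD:
  assumes "lat_ideal A I"
  shows "I \<subseteq> A" "\<And>x y. x \<in> I \<Longrightarrow> y \<in> A \<Longrightarrow> y \<le> x \<Longrightarrow> y \<in> I" "pbot A \<in> I"
    "\<And>x y. x \<in> I \<Longrightarrow> y \<in> I \<Longrightarrow> pjoin2 A x y \<in> I"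
  using assms unfolding lat_ideal_def by auto

locale coherent_frame = frame_on +
  assumes coherent: "coherent S"
begin

abbreviation B :: "'a set" where "B \<equiv> COpen S"

lemma compact_open_ptop: "compact_open S (ptop S)"
  using coherent unfolding coherent_def COpen_def by blast

lemma COpen_subset: "B \<subseteq> S"
  unfolding COpen_def compact_open_def by blast
lemma pbot_COpen: "pbot S \<in> B"
  using compact_open_pbot unfolding COpen_def by blast
lemma ptop_COpen: "ptop S \<in> B"
  using compact_open_ptop unfolding COpen_def by blast
lemma pmeet2_COpen: "a \<in> B \<Longrightarrow> b \<in> B \<Longrightarrow> pmeet2 S a b \<in> B"
  using coherent unfolding coherent_def by blast
lemma pjoin2_COpen: "a \<in> B \<Longrightarrow> b \<in> B \<Longrightarrow> pjoin2 S a b \<in> B"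
  using compact_open_pjoin2 unfolding COpen_def by blast

lemma COpen_pjoin2: "a \<in> B \<Longrightarrow> b \<in> B \<Longrightarrow> pjoin2 B a b = pjoin2 S a b"
  using pjoin2_subcarrier COpen_subset pjoin2_COpen by blast
lemma COpen_pmeet2: "a \<in> B \<Longrightarrow> b \<in> B \<Longrightarrow> pmeet2 B a b = pmeet2 S a b"
  using pmeet2_subcarrier COpen_subset pmeet2_COpen by blast
lemma COpen_pbot: "pbot B = pbot S"
  using pbot_subcarrier COpen_subset pbot_COpen by blast
lemma COpen_ptop: "ptop B = ptop S"
  using ptop_subcarrier COpen_subset ptop_COpen by blast

text \<open>Since \<top> is compact, every complemented element is compact: a cover of c together with its
  complement covers \<top>.\<close>

lemma complemented_imp_compact_open:
  assumes c: "complemented c"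
  shows "compact_open S c"
proof -
  obtain d where d: "c \<in> S" "d \<in> S" "pmeet2 S c d = pbot S" "pjoin2 S c d = ptop S"
    using c unfolding complemented_def by blast
  have "\<exists>F\<subseteq>X. finite F \<and> c \<le> pjoin S F" if X: "X \<subseteq> S" "c \<le> pjoin S X" for X
  proof -
    have dX: "insert d X \<subseteq> S" using X d by auto
    have "c \<le> pjoin S (insert d X)"
      using X(2) pjoin_mono[OF subset_insertI dX] by (rule order_trans)
    moreover have "d \<le> pjoin S (insert d X)" using pjoin_upper[OF dX] by blast
    ultimately have "ptop S \<le> pjoin S (insert d X)"
      using d pjoin2_le_iff[OF d(1,2) pjoin_closed[OF dX]] by simp
    then obtain F where F: "F \<subseteq> insert d X" "finite F" "ptop S \<le> pjoin S F"
      using compact_open_ptop dX unfolding compact_open_def by blast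
    let ?F = "F - {d}"
    have FS: "?F \<subseteq> S" using F dX by auto
    have "pjoin S F \<le> pjoin S (insert d ?F)" using FS d by (intro pjoin_mono) auto
    also have "\<dots> = pjoin2 S d (pjoin S ?F)" using pjoin_insert d FS by blast
    finally have "ptop S \<le> pjoin2 S d (pjoin S ?F)" by (rule order_trans[OF F(3)])
    hence "pjoin2 S d (pjoin S ?F) = ptop S"
      using ptop_le_iff pjoin2_closed d pjoin_closed[OF FS] by blast
    hence "c \<le> pjoin S ?F" using le_of_disjoint_cover d pjoin_closed[OF FS] by blast
    thus ?thesis using F by (intro exI[of _ ?F]) auto
  qed
  thus ?thesis unfolding compact_open_def using d by blast
qed

definition copens_below :: "'a \<Rightarrow> 'a set" where
  "copens_below x = {c\<in>B. c \<le> x}"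

lemma lat_ideal_COpenD:
  assumes "lat_ideal B I"
  shows "I \<subseteq> B" "\<And>x y. x \<in> I \<Longrightarrow> y \<in> B \<Longrightarrow> y \<le> x \<Longrightarrow> y \<in> I" "pbot S \<in> I"
    "\<And>x y. x \<in> I \<Longrightarrow> y \<in> I \<Longrightarrow> pjoin2 S x y \<in> I"
proof -
  note l = lat_idealD[OF assms]
  show "I \<subseteq> B" "\<And>x y. x \<in> I \<Longrightarrow> y \<in> B \<Longrightarrow> y \<le> x \<Longrightarrow> y \<in> I" by (fact l(1,2))+
  show "pbot S \<in> I" using l(3) COpen_pbot by simp
  show "pjoin2 S x y \<in> I" if "x \<in> I" "y \<in> I" for x y
  proof -
    have "x \<in> B" "y \<in> B" using that l(1) by auto
    thus ?thesis using l(4)[OF that] COpen_pjoin2 by simp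
  qed
qed

lemma copens_below_Idl:
  assumes x: "x \<in> S"
  shows "copens_below x \<in> Idl B"
proof -
  let ?I = "copens_below x"
  have "pjoin2 B a b \<in> ?I" if "a \<in> ?I" "b \<in> ?I" for a b
  proof -
    have ab: "a \<in> B" "b \<in> B" "a \<le> x" "b \<le> x" using that unfolding copens_below_def by auto
    hence "pjoin2 S a b \<le> x" using pjoin2_le_iff COpen_subset x by blast
    thus ?thesis using ab COpen_pjoin2 pjoin2_COpen unfolding copens_below_def by simp
  qed
  moreover have "pbot B \<in> ?I"
    unfolding copens_below_def COpen_pbot using pbot_COpen pbot_le x by blast
  moreover have "y \<in> ?I" if "a \<in> ?I" "y \<in> B" "y \<le> a" for a y
    using that order_trans unfolding copens_below_def by blast
  moreover have "?I \<subseteq> B" unfolding copens_below_def by blast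
  ultimately show ?thesis unfolding Idl_def lat_ideal_def by blast
qed

lemma pjoin_Idl_COpen_closed:
  assumes "I \<in> Idl B"
  shows "pjoin S I \<in> S"
proof -
  have "I \<subseteq> S" using assms lat_ideal_COpenD(1) COpen_subset unfolding Idl_def by auto
  thus ?thesis by (rule pjoin_closed)
qed

lemma pjoin_copens_below:
  assumes x: "x \<in> S"
  shows "pjoin S (copens_below x) = x"
proof (rule antisym)
  have PS: "copens_below x \<subseteq> S" unfolding copens_below_def using COpen_subset by blast
  show "pjoin S (copens_below x) \<le> x" using pjoin_least PS x unfolding copens_below_def by blast
  obtain C where C: "C \<subseteq> B" "x = pjoin S C" using coherent x unfolding coherent_def by blast
  have "C \<subseteq> copens_below x" unfolding copens_below_def using C pjoin_upper COpen_subset by blast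
  thus "x \<le> pjoin S (copens_below x)" using C pjoin_mono PS by metis
qed

lemma copens_below_pjoin:
  assumes I: "I \<in> Idl B"
  shows "copens_below (pjoin S I) = I"
proof
  note id = lat_ideal_COpenD[OF I[unfolded Idl_def, simplified]]
  have IS: "I \<subseteq> S" using id(1) COpen_subset by blast
  show "I \<subseteq> copens_below (pjoin S I)" unfolding copens_below_def using id(1) pjoin_upper IS by blast
  show "copens_below (pjoin S I) \<subseteq> I"
  proof
    fix c assume "c \<in> copens_below (pjoin S I)"
    hence c: "c \<in> B" "c \<le> pjoin S I" unfolding copens_below_def by auto
    have "compact_open S c" using c unfolding COpen_def by blast
    then obtain d where "d \<in> I" "c \<le> d"
      using compact_open_le_member[OF _ IS _ id(4) c(2)] id(3) by blast
    thus "c \<in> I" using id(2) c by blast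
  qed
qed

lemma order_iso_copens_below: "order_iso_on S (Idl B) copens_below"
proof -
  have le: "copens_below x \<subseteq> copens_below y \<longleftrightarrow> x \<le> y" if "x \<in> S" "y \<in> S" for x y
  proof
    assume "copens_below x \<subseteq> copens_below y"
    hence "pjoin S (copens_below x) \<le> pjoin S (copens_below y)"
      using pjoin_mono COpen_subset unfolding copens_below_def by (auto simp: subset_iff)
    thus "x \<le> y" using pjoin_copens_below that by simp
  qed (auto simp: copens_below_def)
  have "inj_on copens_below S" unfolding inj_on_def using le by (metis antisym order_refl)
  moreover have "copens_below ` S = Idl B"
    using copens_below_Idl copens_below_pjoin pjoin_Idl_COpen_closed
      by (metis image_eqI subsetI subset_antisym image_subsetI)
  ultimately show ?thesis unfolding order_iso_on_def bij_betw_def using le by auto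
qed

lemma order_iso_pjoin_Idl_COpen: "order_iso_on (Idl B) S (pjoin S)"
  using order_iso_inverse[OF order_iso_copens_below] pjoin_copens_below by blast

lemma open_frame_hom_pjoin_Idl_COpen: "open_frame_hom (Idl B) S (pjoin S)"
proof -
  interpret I: complete_lattice_on "Idl B"
    by unfold_locales (rule order_iso_complete_poset[OF order_iso_copens_below])
  show ?thesis using I.order_iso_open_frame_hom[OF order_iso_pjoin_Idl_COpen] .
qed

lemma open_frame_hom_copens_below: "open_frame_hom S (Idl B) copens_below"
  using order_iso_open_frame_hom[OF order_iso_copens_below] .

end

section \<open>Stonean frames\<close>

locale stonean_on = coherent_frame +
  assumes regular: "regular_frame S" and ext_disconnected: "extremally_disconnected S"

lemma stonean_imp_stonean_on: "stonean S \<Longrightarrow> stonean_on S"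
  unfolding stonean_def stonean_on_def stonean_on_axioms_def coherent_frame_def
    coherent_frame_axioms_def
  using frame_imp_frame_on by blast

context stonean_on
begin

lemma pneg_complemented: "x \<in> S \<Longrightarrow> complemented (pneg S x)"
  using ext_disconnected pneg_complementedI unfolding extremally_disconnected_def by blast

text \<open>By regularity c is the join of the elements well inside it; these are closed under joins, so
  compactness puts c itself among them, i.e. \<not>c \<squnion> c = \<top>.\<close>

lemma compact_open_imp_complemented:
  assumes c: "compact_open S c"
  shows "complemented c"
proof -
  have cS: "c \<in> S" using c unfolding compact_open_def by blast
  let ?R = "{x\<in>S. pjoin2 S (pneg S x) c = ptop S}"
  have R: "?R \<subseteq> S" by blast
  have "c = pjoin S ?R" using regular cS unfolding regular_frame_def by blast
  hence c_eq: "pjoin S ?R = c" by (rule sym)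
  have "pbot S \<in> ?R"
    using pbot_closed pneg_pbot pjoin2_absorb1[OF ptop_closed cS le_ptop[OF cS]] by simp
  hence "?R \<noteq> {}" by blast
  moreover have "pjoin2 S x y \<in> ?R" if "x \<in> ?R" "y \<in> ?R" for x y
    using that well_inside_pjoin2 cS pjoin2_closed by blast
  moreover have "c \<le> pjoin S ?R" using c_eq by simp
  ultimately obtain x where x: "x \<in> ?R" "c \<le> x"
    using compact_open_le_member[OF c R] by blast
  have "x \<le> c" using pjoin_upper[OF R x(1)] c_eq by simp
  hence "x = c" using x(2) by (rule antisym)
  hence "pjoin2 S (pneg S c) c = ptop S" using x(1) by blast
  hence "pjoin2 S c (pneg S c) = ptop S" using pjoin2_commute[of c "pneg S c"] by simp
  thus ?thesis unfolding complemented_def using cS pneg_closed pmeet2_pneg_right by blast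
qed

lemma COpen_iff_complemented: "c \<in> B \<longleftrightarrow> complemented c"
  unfolding COpen_def using complemented_imp_compact_open compact_open_imp_complemented by blast

lemma pneg_COpen: "x \<in> S \<Longrightarrow> pneg S x \<in> B"
  using pneg_complemented COpen_iff_complemented by blast

lemma pneg_pneg_COpen: "c \<in> B \<Longrightarrow> pneg S (pneg S c) = c"
  using complemented_pneg_pneg COpen_iff_complemented by blast

lemma COpen_lub:
  assumes X: "X \<subseteq> B"
  shows "p_is_lub B X (pneg S (pneg S (pjoin S X)))"
proof (rule p_is_lubI)
  have XS: "X \<subseteq> S" using X COpen_subset by blast
  show "pneg S (pneg S (pjoin S X)) \<in> B" using pneg_COpen pneg_closed by blast
  show "y \<le> pneg S (pneg S (pjoin S X))" if "y \<in> X" for y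
    using that pjoin_upper[OF XS] le_pneg_pneg[OF pjoin_closed[OF XS]] by (blast intro: order_trans)
  fix z assume z: "z \<in> B" "\<forall>y\<in>X. y \<le> z"
  have zS: "z \<in> S" using z COpen_subset by blast
  have "pjoin S X \<le> z" using pjoin_least XS zS z by blast
  hence "pneg S (pneg S (pjoin S X)) \<le> pneg S (pneg S z)"
    using pneg_antimono pjoin_closed XS zS pneg_closed by metis
  thus "pneg S (pneg S (pjoin S X)) \<le> z" using pneg_pneg_COpen z by simp
qed

lemma COpen_pjoin: "X \<subseteq> B \<Longrightarrow> pjoin B X = pneg S (pneg S (pjoin S X))"
  using COpen_lub pjoin_unique by blast

lemma complete_poset_COpen: "complete_poset B"
  unfolding complete_poset_def using COpen_lub by blast

lemma cba_on_COpen: "cba_on B"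
proof -
  interpret b: complete_lattice_on B by unfold_locales (rule complete_poset_COpen)
  show ?thesis
  proof unfold_locales
    fix a b c assume abc: "a \<in> B" "b \<in> B" "c \<in> B"
    show "pmeet2 B a (pjoin2 B b c) = pjoin2 B (pmeet2 B a b) (pmeet2 B a c)"
      using abc COpen_pjoin2 COpen_pmeet2 pmeet2_COpen pjoin2_COpen pmeet2_pjoin2_distrib COpen_subset
      by (simp add: subset_iff)
  next
    fix a assume a: "a \<in> B"
    have "pneg S a \<in> B" using pneg_COpen a COpen_subset by blast
    moreover have "pmeet2 S a (pneg S a) = pbot S" "pjoin2 S a (pneg S a) = ptop S"
      using a COpen_iff_complemented complemented_pjoin2_pneg pmeet2_pneg_right COpen_subset by auto
    ultimately show "\<exists>b\<in>B. pmeet2 B a b = pbot B \<and> pjoin2 B a b = ptop B"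
      using a COpen_pjoin2 COpen_pmeet2 COpen_pbot COpen_ptop by metis
  qed
qed

end

section \<open>The frame of ideals of a complete Boolean algebra\<close>

context cba_on
begin

definition down :: "'a \<Rightarrow> 'a set" where
  "down a = {b\<in>S. b \<le> a}"

definition ideal_gen :: "'a set \<Rightarrow> 'a set" where
  "ideal_gen X = {a\<in>S. \<exists>F. finite F \<and> F \<subseteq> X \<and> a \<le> pjoin S F}"

lemma IdlI:
  assumes "I \<subseteq> S" "\<And>x y. x \<in> I \<Longrightarrow> y \<in> S \<Longrightarrow> y \<le> x \<Longrightarrow> y \<in> I" "pbot S \<in> I"
    "\<And>x y. x \<in> I \<Longrightarrow> y \<in> I \<Longrightarrow> pjoin2 S x y \<in> I"
  shows "I \<in> Idl S"
proof -
  have "lat_ideal S I" unfolding lat_ideal_def using assms by (intro conjI ballI impI) auto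
  thus ?thesis unfolding Idl_def by simp
qed

lemma IdlD:
  assumes "I \<in> Idl S"
  shows "I \<subseteq> S" "\<And>x y. x \<in> I \<Longrightarrow> y \<in> S \<Longrightarrow> y \<le> x \<Longrightarrow> y \<in> I" "pbot S \<in> I"
    "\<And>x y. x \<in> I \<Longrightarrow> y \<in> I \<Longrightarrow> pjoin2 S x y \<in> I"
  using lat_idealD[of S I] assms unfolding Idl_def by auto

lemma Idl_pjoin_finite:
  assumes I: "I \<in> Idl S" and F: "finite F" "F \<subseteq> I"
  shows "pjoin S F \<in> I"
  using F
proof (induction F rule: finite_induct)
  case empty thus ?case using IdlD(3)[OF I] pjoin_empty by simp
next
  case (insert x F)
  have xS: "x \<in> I" "x \<in> S" and FS: "F \<subseteq> S" using insert IdlD(1)[OF I] by auto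
  have "pjoin S (insert x F) = pjoin2 S x (pjoin S F)" using pjoin_insert xS FS by blast
  thus ?case using IdlD(4)[OF I] insert xS by auto
qed

lemma down_Idl:
  assumes a: "a \<in> S"
  shows "down a \<in> Idl S"
proof (rule IdlI)
  show "down a \<subseteq> S" unfolding down_def by blast
  show "\<And>x y. x \<in> down a \<Longrightarrow> y \<in> S \<Longrightarrow> y \<le> x \<Longrightarrow> y \<in> down a" unfolding down_def by auto
  show "pbot S \<in> down a" unfolding down_def using pbot_closed pbot_le a by blast
  fix x y assume "x \<in> down a" "y \<in> down a"
  thus "pjoin2 S x y \<in> down a" unfolding down_def using pjoin2_closed pjoin2_le_iff a by auto
qed

lemma pjoin_down: "a \<in> S \<Longrightarrow> pjoin S (down a) = a"
  by (rule pjoin_eq_greatest) (auto simp: down_def)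

lemma down_subset_iff: "a \<in> S \<Longrightarrow> b \<in> S \<Longrightarrow> down a \<subseteq> down b \<longleftrightarrow> a \<le> b"
  unfolding down_def by (auto intro: order_trans)

lemma ideal_gen_Idl:
  assumes X: "X \<subseteq> S"
  shows "ideal_gen X \<in> Idl S"
proof (rule IdlI)
  show "ideal_gen X \<subseteq> S" unfolding ideal_gen_def by blast
  show "\<And>x y. x \<in> ideal_gen X \<Longrightarrow> y \<in> S \<Longrightarrow> y \<le> x \<Longrightarrow> y \<in> ideal_gen X"
    unfolding ideal_gen_def by (auto intro: order_trans)
  have "pbot S \<le> pjoin S {}" using pjoin_empty by simp
  thus "pbot S \<in> ideal_gen X" unfolding ideal_gen_def using pbot_closed by blast
  fix x y assume x: "x \<in> ideal_gen X" and y: "y \<in> ideal_gen X"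
  obtain F where F: "finite F" "F \<subseteq> X" "x \<le> pjoin S F" "x \<in> S"
    using x unfolding ideal_gen_def by blast
  obtain G where G: "finite G" "G \<subseteq> X" "y \<le> pjoin S G" "y \<in> S"
    using y unfolding ideal_gen_def by blast
  have FS: "F \<subseteq> S" "G \<subseteq> S" using F G X by auto
  have "pjoin2 S x y \<le> pjoin2 S (pjoin S F) (pjoin S G)"
    using F G FS pjoin_closed by (intro pjoin2_mono) auto
  also have "\<dots> = pjoin S (F \<union> G)" using pjoin_Un FS by simp
  finally have "pjoin2 S x y \<le> pjoin S (F \<union> G)" .
  moreover have "finite (F \<union> G)" "F \<union> G \<subseteq> X" using F G by auto
  moreover have "pjoin2 S x y \<in> S" using pjoin2_closed F G by blast
  ultimately show "pjoin2 S x y \<in> ideal_gen X" unfolding ideal_gen_def by blast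
qed

lemma ideal_gen_least:
  assumes Z: "Z \<in> Idl S" "X \<subseteq> Z"
  shows "ideal_gen X \<subseteq> Z"
proof
  fix a assume "a \<in> ideal_gen X"
  then obtain F where F: "a \<in> S" "finite F" "F \<subseteq> X" "a \<le> pjoin S F" unfolding ideal_gen_def by blast
  have "pjoin S F \<in> Z" using Idl_pjoin_finite[OF Z(1) F(2)] F Z by blast
  thus "a \<in> Z" using IdlD(2)[OF Z(1)] F by blast
qed

lemma ideal_gen_upper: "X \<subseteq> S \<Longrightarrow> X \<subseteq> ideal_gen X"
proof
  fix x assume "X \<subseteq> S" "x \<in> X"
  moreover hence "x \<le> pjoin S {x}" using pjoin_upper by auto
  ultimately show "x \<in> ideal_gen X" unfolding ideal_gen_def by blast
qed

lemma Idl_lub: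
  assumes I: "II \<subseteq> Idl S"
  shows "p_is_lub (Idl S) II (ideal_gen (\<Union>II))"
proof (rule p_is_lubI)
  have U: "\<Union>II \<subseteq> S" using I IdlD(1) by blast
  show "ideal_gen (\<Union>II) \<in> Idl S" using ideal_gen_Idl U .
  show "\<And>y. y \<in> II \<Longrightarrow> y \<le> ideal_gen (\<Union>II)" using ideal_gen_upper U by blast
  show "\<And>z. z \<in> Idl S \<Longrightarrow> \<forall>y\<in>II. y \<le> z \<Longrightarrow> ideal_gen (\<Union>II) \<le> z"
    using ideal_gen_least by (simp add: Sup_le_iff)
qed

lemma Idl_pjoin: "II \<subseteq> Idl S \<Longrightarrow> pjoin (Idl S) II = ideal_gen (\<Union>II)"
  using Idl_lub pjoin_unique by blast

lemma Idl_complete: "complete_poset (Idl S)"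
  unfolding complete_poset_def using Idl_lub by blast

lemma Idl_Int:
  assumes "I \<in> Idl S" "J \<in> Idl S"
  shows "I \<inter> J \<in> Idl S"
proof (rule IdlI)
  note a = IdlD[OF assms(1)] and b = IdlD[OF assms(2)]
  show "I \<inter> J \<subseteq> S" "pbot S \<in> I \<inter> J" using a(1,3) b(3) by auto
  show "y \<in> I \<inter> J" if "x \<in> I \<inter> J" "y \<in> S" "y \<le> x" for x y
    using that a(2)[of x y] b(2)[of x y] by simp
  show "pjoin2 S x y \<in> I \<inter> J" if "x \<in> I \<inter> J" "y \<in> I \<inter> J" for x y
    using that a(4)[of x y] b(4)[of x y] by simp
qed

lemma Idl_pmeet2:
  assumes "I \<in> Idl S" "J \<in> Idl S"
  shows "pmeet2 (Idl S) I J = I \<inter> J"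
  unfolding pmeet2_def[of "Idl S"] by (rule pmeet_eqI) (use Idl_Int assms in auto)

lemma Idl_pmeet:
  assumes X: "XX \<subseteq> Idl S"
  shows "pmeet (Idl S) XX = S \<inter> \<Inter>XX"
proof (rule pmeet_eqI)
  show "S \<inter> \<Inter>XX \<in> Idl S"
  proof (rule IdlI)
    show "S \<inter> \<Inter> XX \<subseteq> S" by blast
    show "\<And>x y. x \<in> S \<inter> \<Inter> XX \<Longrightarrow> y \<in> S \<Longrightarrow> y \<le> x \<Longrightarrow> y \<in> S \<inter> \<Inter> XX"
      using X IdlD(2) by blast
    show "pbot S \<in> S \<inter> \<Inter> XX" using X IdlD(3) pbot_closed by blast
    show "\<And>x y. x \<in> S \<inter> \<Inter> XX \<Longrightarrow> y \<in> S \<inter> \<Inter> XX \<Longrightarrow> pjoin2 S x y \<in> S \<inter> \<Inter> XX"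
      using X IdlD(4) pjoin2_closed by blast
  qed
  show "\<And>y. y \<in> XX \<Longrightarrow> S \<inter> \<Inter> XX \<le> y" by blast
  show "\<And>z. z \<in> Idl S \<Longrightarrow> \<forall>y\<in>XX. z \<le> y \<Longrightarrow> z \<le> S \<inter> \<Inter> XX" using IdlD(1) by blast
qed

lemma carrier_Idl: "S \<in> Idl S"
  by (rule IdlI) (auto simp: pbot_closed pjoin2_closed)

lemma pbot_singleton_Idl: "{pbot S} \<in> Idl S"
  by (rule IdlI) (auto simp: pbot_closed le_pbot_iff pjoin2_pbot_left pbot_closed)

lemma Idl_ptop: "ptop (Idl S) = S"
  unfolding ptop_def[of "Idl S"] by (rule pmeet_eqI) (use carrier_Idl IdlD(1) in auto)

lemma Idl_pbot: "pbot (Idl S) = {pbot S}"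
  unfolding pbot_def[of "Idl S"] by (rule pjoin_eqI) (use pbot_singleton_Idl IdlD(3) in auto)

lemma Idl_pjoin2:
  assumes I: "I \<in> Idl S" and J: "J \<in> Idl S"
  shows "pjoin2 (Idl S) I J = {a\<in>S. \<exists>i\<in>I. \<exists>j\<in>J. a \<le> pjoin2 S i j}"
proof -
  note IS = IdlD(1)[OF I] and JS = IdlD(1)[OF J]
  have "ideal_gen (I \<union> J) = {a\<in>S. \<exists>i\<in>I. \<exists>j\<in>J. a \<le> pjoin2 S i j}"
  proof (intro set_eqI iffI)
    fix a assume "a \<in> ideal_gen (I \<union> J)"
    then obtain F where F: "a \<in> S" "finite F" "F \<subseteq> I \<union> J" "a \<le> pjoin S F"
      unfolding ideal_gen_def by blast
    have FI: "F \<inter> I \<subseteq> S" "F \<inter> J \<subseteq> S" using IS JS by auto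
    have "pjoin S F \<le> pjoin S ((F \<inter> I) \<union> (F \<inter> J))" using F(3) FI by (intro pjoin_mono) auto
    also have "\<dots> = pjoin2 S (pjoin S (F \<inter> I)) (pjoin S (F \<inter> J))" using pjoin_Un FI by blast
    finally have "a \<le> pjoin2 S (pjoin S (F \<inter> I)) (pjoin S (F \<inter> J))"
      using F(4) by (rule order_trans[rotated])
    moreover have "pjoin S (F \<inter> I) \<in> I" "pjoin S (F \<inter> J) \<in> J"
      using Idl_pjoin_finite I J F(2) by auto
    ultimately show "a \<in> {a\<in>S. \<exists>i\<in>I. \<exists>j\<in>J. a \<le> pjoin2 S i j}" using F(1) by blast
  next
    fix a assume "a \<in> {a\<in>S. \<exists>i\<in>I. \<exists>j\<in>J. a \<le> pjoin2 S i j}"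
    then obtain i j where "a \<in> S" "i \<in> I" "j \<in> J" "a \<le> pjoin S {i, j}"
      unfolding pjoin2_def by blast
    thus "a \<in> ideal_gen (I \<union> J)"
      unfolding ideal_gen_def by (intro CollectI conjI exI[of _ "{i, j}"]) auto
  qed
  thus ?thesis unfolding pjoin2_def using Idl_pjoin[of "{I, J}"] I J by simp
qed

lemma Int_ideal_gen:
  assumes I: "I \<in> Idl S" and XX: "XX \<subseteq> Idl S"
  shows "I \<inter> ideal_gen (\<Union>XX) = ideal_gen (\<Union>X\<in>XX. I \<inter> X)"
proof (intro set_eqI iffI)
  have US: "\<Union>XX \<subseteq> S" using XX IdlD(1) by blast
  fix a assume a: "a \<in> I \<inter> ideal_gen (\<Union>XX)"
  then obtain F where F: "a \<in> S" "finite F" "F \<subseteq> \<Union>XX" "a \<le> pjoin S F"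
    unfolding ideal_gen_def by blast
  have FS: "F \<subseteq> S" using F US by blast
  let ?G = "(\<lambda>f. pmeet2 S a f) ` F"
  have "a = pmeet2 S a (pjoin S F)" using F pmeet2_absorb1 pjoin_closed FS by simp
  also have "\<dots> = pjoin S ?G" using pmeet2_pjoin_distrib F FS by blast
  finally have aG: "a \<le> pjoin S ?G" by simp
  have "?G \<subseteq> (\<Union>X\<in>XX. I \<inter> X)"
  proof
    fix g assume "g \<in> ?G"
    then obtain f X where f: "f \<in> F" "g = pmeet2 S a f" "X \<in> XX" "f \<in> X" using F by blast
    have fS: "f \<in> S" using f FS by blast
    have "g \<in> I" using IdlD(2)[OF I] a f fS F(1) pmeet2_closed pmeet2_lower1 by blast
    moreover have "g \<in> X" using IdlD(2)[of X] XX f fS F(1) pmeet2_closed pmeet2_lower2 by blast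
    ultimately show "g \<in> (\<Union>X\<in>XX. I \<inter> X)" using f by blast
  qed
  thus "a \<in> ideal_gen (\<Union>X\<in>XX. I \<inter> X)" unfolding ideal_gen_def using aG F by blast
next
  fix a assume "a \<in> ideal_gen (\<Union>X\<in>XX. I \<inter> X)"
  then obtain F where F: "a \<in> S" "finite F" "F \<subseteq> (\<Union>X\<in>XX. I \<inter> X)" "a \<le> pjoin S F"
    unfolding ideal_gen_def by blast
  have "pjoin S F \<in> I" using Idl_pjoin_finite I F by blast
  hence "a \<in> I" using IdlD(2)[OF I] F by blast
  thus "a \<in> I \<inter> ideal_gen (\<Union>XX)" unfolding ideal_gen_def using F by blast
qed

lemma frame_on_Idl: "frame_on (Idl S)"
proof -
  interpret I: complete_lattice_on "Idl S" by unfold_locales (rule Idl_complete)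
  show ?thesis
  proof unfold_locales
    fix I XX assume I: "I \<in> Idl S" and XX: "XX \<subseteq> Idl S"
    have im: "(\<lambda>X. pmeet2 (Idl S) I X) ` XX = (\<lambda>X. I \<inter> X) ` XX" using Idl_pmeet2 I XX by auto
    have "pmeet2 (Idl S) I (pjoin (Idl S) XX) = I \<inter> ideal_gen (\<Union>XX)"
      using Idl_pmeet2 I Idl_pjoin XX I.pjoin_closed by simp
    also have "\<dots> = pjoin (Idl S) ((\<lambda>X. I \<inter> X) ` XX)"
      using Int_ideal_gen[OF I XX] Idl_pjoin[of "(\<lambda>X. I \<inter> X) ` XX"] Idl_Int I XX by auto
    finally show "pmeet2 (Idl S) I (pjoin (Idl S) XX) = pjoin (Idl S) ((\<lambda>X. pmeet2 (Idl S) I X) ` XX)"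
      unfolding im .
  qed
qed

lemma himp_ideal_Idl:
  assumes I: "I \<in> Idl S" and J: "J \<in> Idl S"
  shows "{a\<in>S. \<forall>i\<in>I. pmeet2 S a i \<in> J} \<in> Idl S"
proof (rule IdlI)
  let ?H = "{a\<in>S. \<forall>i\<in>I. pmeet2 S a i \<in> J}"
  note a = IdlD[OF I] and b = IdlD[OF J]
  show "?H \<subseteq> S" by blast
  show "y \<in> ?H" if x: "x \<in> ?H" and y: "y \<in> S" "y \<le> x" for x y
  proof -
    have "pmeet2 S y i \<in> J" if i: "i \<in> I" for i
    proof -
      have iS: "i \<in> S" using i a by blast
      have "pmeet2 S y i \<le> pmeet2 S x i" using y x iS by (intro pmeet2_mono) auto
      thus ?thesis using b(2) x i pmeet2_closed y iS by blast
    qed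
    thus ?thesis using y by blast
  qed
  show "pbot S \<in> ?H" using pmeet2_pbot_left a b pbot_closed by auto
  show "pjoin2 S x y \<in> ?H" if x: "x \<in> ?H" and y: "y \<in> ?H" for x y
  proof -
    have "pmeet2 S (pjoin2 S x y) i \<in> J" if i: "i \<in> I" for i
    proof -
      have iS: "i \<in> S" using i a by blast
      have "pmeet2 S (pjoin2 S x y) i = pmeet2 S i (pjoin2 S x y)" by (rule pmeet2_commute)
      also have "\<dots> = pjoin2 S (pmeet2 S i x) (pmeet2 S i y)"
        using pmeet2_pjoin2_distrib iS x y by blast
      also have "\<dots> = pjoin2 S (pmeet2 S x i) (pmeet2 S y i)"
        using pmeet2_commute[of i x] pmeet2_commute[of i y] by simp
      finally show ?thesis using x y i b(4) by simp
    qed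
    thus ?thesis using pjoin2_closed x y by blast
  qed
qed

lemma Idl_himp:
  assumes I: "I \<in> Idl S" and J: "J \<in> Idl S"
  shows "himp (Idl S) I J = {a\<in>S. \<forall>i\<in>I. pmeet2 S a i \<in> J}"
  unfolding himp_def
proof (rule pjoin_eq_greatest)
  let ?H = "{a\<in>S. \<forall>i\<in>I. pmeet2 S a i \<in> J}"
  note a = IdlD[OF I]
  show H: "?H \<in> Idl S" using himp_ideal_Idl[OF I J] .
  have "?H \<inter> I \<subseteq> J" using pmeet2_idem by force
  thus "?H \<in> {w \<in> Idl S. pmeet2 (Idl S) w I \<le> J}" using H Idl_pmeet2 I by auto
  fix W assume "W \<in> {w \<in> Idl S. pmeet2 (Idl S) w I \<le> J}"
  hence W: "W \<in> Idl S" "W \<inter> I \<subseteq> J" using Idl_pmeet2 I by auto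
  show "W \<le> ?H"
  proof
    fix x assume x: "x \<in> W"
    have xS: "x \<in> S" using x IdlD(1)[OF W(1)] by blast
    have "pmeet2 S x i \<in> J" if i: "i \<in> I" for i
    proof -
      have iS: "i \<in> S" using i a by blast
      have "pmeet2 S x i \<in> W" using IdlD(2)[OF W(1)] x pmeet2_closed xS iS pmeet2_lower1 by blast
      moreover have "pmeet2 S x i \<in> I" using a(2) i pmeet2_closed xS iS pmeet2_lower2 by blast
      ultimately show ?thesis using W by blast
    qed
    thus "x \<in> ?H" using xS by blast
  qed
qed

lemma Idl_pneg:
  assumes I: "I \<in> Idl S"
  shows "pneg (Idl S) I = down (pneg S (pjoin S I))"
proof -
  note a = IdlD[OF I]
  have JI: "pjoin S I \<in> S" using pjoin_closed a(1) .
  have "pneg (Idl S) I = {x\<in>S. \<forall>i\<in>I. pmeet2 S x i \<in> {pbot S}}"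
    unfolding pneg_def Idl_pbot using Idl_himp I pbot_singleton_Idl by blast
  also have "\<dots> = down (pneg S (pjoin S I))"
  proof -
    have "(\<forall>i\<in>I. pmeet2 S x i = pbot S) \<longleftrightarrow> x \<le> pneg S (pjoin S I)" if x: "x \<in> S" for x
    proof
      assume A: "\<forall>i\<in>I. pmeet2 S x i = pbot S"
      have "pmeet2 S x (pjoin S I) = pjoin S ((\<lambda>i. pmeet2 S x i) ` I)"
        using pmeet2_pjoin_distrib x a(1) by blast
      also have "\<dots> \<le> pbot S" using A pbot_closed a(1) x pmeet2_closed by (intro pjoin_least) auto
      finally show "x \<le> pneg S (pjoin S I)"
        using le_pneg_iff x JI le_pbot_iff pmeet2_closed by blast
    next
      assume A: "x \<le> pneg S (pjoin S I)"
      hence B: "pmeet2 S x (pjoin S I) = pbot S" using le_pneg_iff x JI by blast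
      show "\<forall>i\<in>I. pmeet2 S x i = pbot S"
      proof
        fix i assume i: "i \<in> I"
        have iS: "i \<in> S" using i a by blast
        have "pmeet2 S x i \<le> pmeet2 S x (pjoin S I)"
          using x iS JI pjoin_upper a(1) i by (intro pmeet2_mono) auto
        thus "pmeet2 S x i = pbot S" using B le_pbot_iff pmeet2_closed x iS by simp
      qed
    qed
    thus ?thesis unfolding down_def by auto
  qed
  finally show ?thesis .
qed

lemma Idl_pneg_pneg:
  assumes I: "I \<in> Idl S"
  shows "pneg (Idl S) (pneg (Idl S) I) = down (pjoin S I)"
proof -
  have JI: "pjoin S I \<in> S" using pjoin_closed IdlD(1)[OF I] .
  have "pneg (Idl S) (pneg (Idl S) I) = down (pneg S (pjoin S (down (pneg S (pjoin S I)))))"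
    using Idl_pneg I down_Idl pneg_closed by simp
  also have "\<dots> = down (pjoin S I)" using pjoin_down pneg_closed pneg_pneg JI by simp
  finally show ?thesis .
qed

lemma Idl_pjoin2_eq_ptop:
  assumes I: "I \<in> Idl S" and J: "J \<in> Idl S" and i: "i \<in> I" and j: "j \<in> J"
  and t: "pjoin2 S i j = ptop S"
  shows "pjoin2 (Idl S) I J = ptop (Idl S)"
proof -
  have "{a\<in>S. \<exists>i\<in>I. \<exists>j\<in>J. a \<le> pjoin2 S i j} = S"
  proof
    show "S \<subseteq> {a\<in>S. \<exists>i\<in>I. \<exists>j\<in>J. a \<le> pjoin2 S i j}"
    proof
      fix x assume "x \<in> S"
      hence "x \<le> pjoin2 S i j" using t le_ptop by simp
      thus "x \<in> {a\<in>S. \<exists>i\<in>I. \<exists>j\<in>J. a \<le> pjoin2 S i j}" using i j \<open>x \<in> S\<close> by blast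
    qed
  qed blast
  hence "pjoin2 (Idl S) I J = S" unfolding Idl_pjoin2[OF I J] .
  thus ?thesis using Idl_ptop by simp
qed

lemma compact_open_down:
  assumes a: "a \<in> S"
  shows "compact_open (Idl S) (down a)"
  unfolding compact_open_def
proof (intro conjI allI impI)
  show "down a \<in> Idl S" using down_Idl a .
  fix XX assume XX: "XX \<subseteq> Idl S" and le: "down a \<le> pjoin (Idl S) XX"
  have "a \<in> down a" unfolding down_def using a by blast
  hence "a \<in> pjoin (Idl S) XX" using le by blast
  hence "a \<in> ideal_gen (\<Union>XX)" using Idl_pjoin[OF XX] by simp
  then obtain F where F: "finite F" "F \<subseteq> \<Union>XX" "a \<le> pjoin S F" unfolding ideal_gen_def by blast
  have "\<forall>f\<in>F. \<exists>X\<in>XX. f \<in> X" using F by blast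
  then obtain g where g: "\<forall>f\<in>F. g f \<in> XX \<and> f \<in> g f"
    using bchoice[of F "\<lambda>f X. X \<in> XX \<and> f \<in> X"] by blast
  let ?FF = "g ` F"
  have FF: "?FF \<subseteq> XX" "finite ?FF" using g F by auto
  have "down a \<subseteq> ideal_gen (\<Union>?FF)"
  proof
    fix b assume "b \<in> down a"
    hence b: "b \<in> S" "b \<le> a" unfolding down_def by auto
    have "F \<subseteq> \<Union>?FF" using g by blast
    moreover have "b \<le> pjoin S F" using b(2) F(3) by (rule order_trans)
    ultimately show "b \<in> ideal_gen (\<Union>?FF)" unfolding ideal_gen_def using b F by blast
  qed
  hence "down a \<le> pjoin (Idl S) ?FF" using Idl_pjoin FF XX by simp
  thus "\<exists>F\<subseteq>XX. finite F \<and> down a \<le> pjoin (Idl S) F" using FF by blast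
qed

lemma Idl_pjoin_down_image:
  assumes K: "K \<in> Idl S"
  shows "pjoin (Idl S) (down ` K) = K"
proof -
  have KS: "K \<subseteq> S" using IdlD(1)[OF K] .
  have sub: "down ` K \<subseteq> Idl S" using down_Idl KS by blast
  have U: "\<Union>(down ` K) = K"
  proof
    show "\<Union>(down ` K) \<subseteq> K" using IdlD(2)[OF K] unfolding down_def by blast
    show "K \<subseteq> \<Union>(down ` K)" using KS unfolding down_def by blast
  qed
  have "ideal_gen K = K"
  proof
    show "ideal_gen K \<subseteq> K" using ideal_gen_least K by blast
    show "K \<subseteq> ideal_gen K" using ideal_gen_upper KS .
  qed
  thus ?thesis using Idl_pjoin sub U by simp
qed

lemma compact_open_Idl_down:
  assumes c: "compact_open (Idl S) K"
  shows "\<exists>k\<in>S. K = down k"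
proof -
  have K: "K \<in> Idl S" using c unfolding compact_open_def by blast
  have KS: "K \<subseteq> S" using IdlD(1)[OF K] .
  have sub: "down ` K \<subseteq> Idl S" using down_Idl KS by blast
  have "K \<le> pjoin (Idl S) (down ` K)" using Idl_pjoin_down_image K by simp
  then obtain FF where FF: "FF \<subseteq> down ` K" "finite FF" "K \<le> pjoin (Idl S) FF"
    using c sub unfolding compact_open_def by blast
  obtain F where F: "F \<subseteq> K" "finite F" "FF = down ` F"
    using finite_subset_image[OF FF(2,1)] by blast
  let ?k = "pjoin S F"
  have k: "?k \<in> K" using Idl_pjoin_finite K F by blast
  have kS: "?k \<in> S" using k KS by blast
  have FFS: "FF \<subseteq> Idl S" using FF sub by blast
  have "pjoin (Idl S) FF = ideal_gen (\<Union>FF)" using Idl_pjoin FFS by blast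
  also have "\<dots> \<subseteq> down ?k"
  proof (rule ideal_gen_least)
    show "down ?k \<in> Idl S" using down_Idl kS .
    show "\<Union>FF \<subseteq> down ?k"
    proof
      fix x assume "x \<in> \<Union>FF"
      then obtain f where f: "f \<in> F" "x \<in> down f" using F by blast
      have "f \<le> ?k" using pjoin_upper F KS f by blast
      thus "x \<in> down ?k" using f unfolding down_def by (auto intro: order_trans)
    qed
  qed
  finally have "K \<subseteq> down ?k" using FF by blast
  moreover have "down ?k \<subseteq> K" using IdlD(2)[OF K] k unfolding down_def by blast
  ultimately show ?thesis using kS by blast
qed

lemma COpen_Idl: "COpen (Idl S) = down ` S"
  unfolding COpen_def using compact_open_down compact_open_Idl_down by blast

lemma order_iso_down: "order_iso_on S (COpen (Idl S)) down"
proof -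
  have "inj_on down S" unfolding inj_on_def using down_subset_iff by (metis antisym order_refl)
  thus ?thesis unfolding order_iso_on_def bij_betw_def COpen_Idl using down_subset_iff by blast
qed

lemma coherent_Idl: "coherent (Idl S)"
  unfolding coherent_def
proof (intro conjI ballI)
  show "ptop (Idl S) \<in> COpen (Idl S)"
    unfolding COpen_Idl Idl_ptop using ptop_closed le_ptop unfolding down_def by blast
next
  fix a b assume "a \<in> COpen (Idl S)" "b \<in> COpen (Idl S)"
  then obtain x y where xy: "x \<in> S" "y \<in> S" "a = down x" "b = down y" unfolding COpen_Idl by blast
  have "pmeet2 (Idl S) a b = a \<inter> b" using Idl_pmeet2 down_Idl xy by blast
  also have "\<dots> = down (pmeet2 S x y)" unfolding xy down_def using le_pmeet2_iff xy by auto
  finally show "pmeet2 (Idl S) a b \<in> COpen (Idl S)" unfolding COpen_Idl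
    using pmeet2_closed xy by blast
next
  fix K assume K: "K \<in> Idl S"
  have "down ` K \<subseteq> COpen (Idl S)" unfolding COpen_Idl using IdlD(1)[OF K] by blast
  thus "\<exists>C\<subseteq>COpen (Idl S). K = pjoin (Idl S) C" using Idl_pjoin_down_image K by metis
qed

lemma Idl_well_inside_subset:
  assumes X: "X \<in> Idl S" and J: "J \<in> Idl S"
    and top: "pjoin2 (Idl S) (pneg (Idl S) X) J = ptop (Idl S)"
  shows "X \<subseteq> J"
proof
  have XS: "X \<subseteq> S" using IdlD(1)[OF X] .
  let ?s = "pjoin S X"
  have sS: "?s \<in> S" using pjoin_closed XS .
  have "ptop S \<in> pjoin2 (Idl S) (down (pneg S ?s)) J"
    using top Idl_pneg[OF X] Idl_ptop ptop_closed by simp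
  then obtain i j where ij: "i \<in> down (pneg S ?s)" "j \<in> J" "ptop S \<le> pjoin2 S i j"
    using Idl_pjoin2[OF down_Idl[OF pneg_closed] J] by blast
  have iS: "i \<in> S" "i \<le> pneg S ?s" using ij unfolding down_def by auto
  have jS: "j \<in> S" using ij IdlD(1)[OF J] by blast
  have t: "pjoin2 S i j = ptop S" using ij ptop_le_iff pjoin2_closed iS jS by blast
  fix x assume x: "x \<in> X"
  have xS: "x \<in> S" using x XS by blast
  have "pmeet2 S x i \<le> pmeet2 S ?s (pneg S ?s)"
    using xS iS sS pneg_closed pjoin_upper[OF XS x] by (intro pmeet2_mono) auto
  hence "pmeet2 S x i = pbot S" using pmeet2_pneg_right sS le_pbot_iff pmeet2_closed xS iS by simp
  hence "x \<le> j" using le_of_disjoint_cover xS iS jS t by blast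
  thus "x \<in> J" using IdlD(2)[OF J] ij xS by blast
qed

lemma regular_frame_Idl: "regular_frame (Idl S)"
  unfolding regular_frame_def
proof
  fix J assume J: "J \<in> Idl S"
  let ?R = "{X \<in> Idl S. pjoin2 (Idl S) (pneg (Idl S) X) J = ptop (Idl S)}"
  show "J = pjoin (Idl S) ?R"
  proof (rule pjoin_eqI[symmetric])
    show "X \<le> J" if "X \<in> ?R" for X using that Idl_well_inside_subset J by blast
    fix Z assume Z: "Z \<in> Idl S" "\<forall>X\<in>?R. X \<le> Z"
    show "J \<le> Z"
    proof
      fix j assume j: "j \<in> J"
      have jS: "j \<in> S" using j IdlD(1)[OF J] by blast
      have "pneg (Idl S) (down j) = down (pneg S j)" using Idl_pneg down_Idl pjoin_down jS by simp
      moreover have "pneg S j \<in> down (pneg S j)" unfolding down_def using pneg_closed by blast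
      moreover have "pjoin2 S (pneg S j) j = ptop S" using pjoin2_pneg jS pjoin2_commute by metis
      ultimately have "pjoin2 (Idl S) (pneg (Idl S) (down j)) J = ptop (Idl S)"
        using Idl_pjoin2_eq_ptop[OF _ J _ j] down_Idl pneg_closed by simp
      hence "down j \<subseteq> Z" using Z down_Idl jS by blast
      thus "j \<in> Z" unfolding down_def using jS by blast
    qed
  qed (use J in simp)
qed

lemma extremally_disconnected_Idl: "extremally_disconnected (Idl S)"
  unfolding extremally_disconnected_def
proof
  fix X assume X: "X \<in> Idl S"
  let ?s = "pjoin S X"
  have "pneg (Idl S) (pneg (Idl S) X) = down (pneg S (pneg S ?s))"
    using Idl_pneg X down_Idl pjoin_down pneg_closed by simp
  moreover have "pneg (Idl S) X = down (pneg S ?s)" using Idl_pneg X by blast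
  ultimately show "pjoin2 (Idl S) (pneg (Idl S) X) (pneg (Idl S) (pneg (Idl S) X)) = ptop (Idl S)"
    using Idl_pjoin2_eq_ptop[of "down (pneg S ?s)" "down (pneg S (pneg S ?s))" "pneg S ?s"
        "pneg S (pneg S ?s)"]
      down_Idl pneg_closed pjoin2_pneg unfolding down_def by simp
qed

lemma stonean_Idl: "stonean (Idl S)"
  unfolding stonean_def
  using frame_on_imp_frame[OF frame_on_Idl] coherent_Idl regular_frame_Idl extremally_disconnected_Idl
  by blast

end

section \<open>Ideal maps of supremum-preserving homomorphisms\<close>

locale cba_hom = A: cba_on A + B: cba_on B for A :: "'a::order set" and B :: "'b::order set" +
  fixes h :: "'a \<Rightarrow> 'b"
  assumes hom: "bool_hom_sup A B h"
begin

lemma hom_closed: "a \<in> A \<Longrightarrow> h a \<in> B" using hom unfolding bool_hom_sup_def by blast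
lemma hom_ptop: "h (ptop A) = ptop B" using hom unfolding bool_hom_sup_def by blast
lemma hom_pbot: "h (pbot A) = pbot B" using hom unfolding bool_hom_sup_def by blast
lemma hom_pmeet2: "a \<in> A \<Longrightarrow> b \<in> A \<Longrightarrow> h (pmeet2 A a b) = pmeet2 B (h a) (h b)"
  using hom unfolding bool_hom_sup_def by blast
lemma hom_pjoin2: "a \<in> A \<Longrightarrow> b \<in> A \<Longrightarrow> h (pjoin2 A a b) = pjoin2 B (h a) (h b)"
  using hom unfolding bool_hom_sup_def by blast
lemma hom_pjoin: "X \<subseteq> A \<Longrightarrow> h (pjoin A X) = pjoin B (h ` X)"
  using hom unfolding bool_hom_sup_def by blast

lemma hom_mono:
  assumes "a \<in> A" "b \<in> A" "a \<le> b"
  shows "h a \<le> h b"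
proof -
  have "h a = h (pmeet2 A a b)" using A.pmeet2_absorb1 assms by simp
  also have "\<dots> = pmeet2 B (h a) (h b)" using hom_pmeet2 assms by blast
  also have "\<dots> \<le> h b" using B.pmeet2_lower2 hom_closed assms by blast
  finally show ?thesis .
qed

lemma hom_pneg:
  assumes a: "a \<in> A"
  shows "h (pneg A a) = pneg B (h a)"
proof -
  have na: "pneg A a \<in> A" using A.pneg_closed .
  have "pmeet2 B (h a) (h (pneg A a)) = pbot B"
    using hom_pmeet2[OF a na] A.pmeet2_pneg_right a hom_pbot by simp
  moreover have "pjoin2 B (h a) (h (pneg A a)) = ptop B"
    using hom_pjoin2[OF a na] A.pjoin2_pneg a hom_ptop by simp
  ultimately show ?thesis using B.complement_eq_pneg hom_closed a na by blast
qed

definition down_image :: "'a set \<Rightarrow> 'b set" where "down_image I = {b\<in>B. \<exists>i\<in>I. b \<le> h i}"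

lemma down_image_Idl:
  assumes I: "I \<in> Idl A"
  shows "down_image I \<in> Idl B"
proof (rule B.IdlI)
  note a = A.IdlD[OF I]
  show "down_image I \<subseteq> B" unfolding down_image_def by blast
  show "\<And>x y. x \<in> down_image I \<Longrightarrow> y \<in> B \<Longrightarrow> y \<le> x \<Longrightarrow> y \<in> down_image I"
  proof -
    fix x y assume "x \<in> down_image I" "y \<in> B" "y \<le> x"
    then obtain i where i: "i \<in> I" "x \<le> h i" unfolding down_image_def by blast
    have "y \<le> h i" using \<open>y \<le> x\<close> i(2) by (rule order_trans)
    thus "y \<in> down_image I" unfolding down_image_def using i \<open>y \<in> B\<close> by blast
  qed
  show "pbot B \<in> down_image I" unfolding down_image_def using a(3) hom_pbot B.pbot_closed by force
  fix x y assume "x \<in> down_image I" "y \<in> down_image I"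
  then obtain i j where ij: "i \<in> I" "x \<le> h i" "j \<in> I" "y \<le> h j" "x \<in> B" "y \<in> B"
    unfolding down_image_def by blast
  have iA: "i \<in> A" "j \<in> A" using ij a(1) by auto
  have "pjoin2 B x y \<le> pjoin2 B (h i) (h j)" using ij iA hom_closed by (intro B.pjoin2_mono) auto
  also have "\<dots> = h (pjoin2 A i j)" using hom_pjoin2 iA by simp
  finally show "pjoin2 B x y \<in> down_image I" unfolding down_image_def
    using a(4) ij B.pjoin2_closed by blast
qed

lemma ideal_map_eq_down_image:
  assumes I: "I \<in> Idl A"
  shows "ideal_map A B h I = down_image I"
proof -
  have "\<Inter>{J\<in>Idl B. h ` I \<subseteq> J} = down_image I"
  proof
    have "h ` I \<subseteq> down_image I" unfolding down_image_def using hom_closed A.IdlD(1)[OF I] by blast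
    thus "\<Inter>{J\<in>Idl B. h ` I \<subseteq> J} \<subseteq> down_image I" using down_image_Idl[OF I] by blast
    show "down_image I \<subseteq> \<Inter>{J\<in>Idl B. h ` I \<subseteq> J}"
    proof
      fix b assume "b \<in> down_image I"
      then obtain i where i: "b \<in> B" "i \<in> I" "b \<le> h i" unfolding down_image_def by blast
      show "b \<in> \<Inter>{J\<in>Idl B. h ` I \<subseteq> J}"
      proof
        fix J assume "J \<in> {J\<in>Idl B. h ` I \<subseteq> J}"
        hence J: "J \<in> Idl B" "h i \<in> J" using i by auto
        thus "b \<in> J" using B.IdlD(2)[OF J(1)] i by blast
      qed
    qed
  qed
  thus ?thesis unfolding ideal_map_def .
qed

text \<open>h preserves all joins and complements, so it has a left adjoint: the least a with b \<le> h a is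
  the complement of the largest a with h a disjoint from b.\<close>

definition lower_adj :: "'b \<Rightarrow> 'a" where
  "lower_adj b = pneg A (pjoin A {a\<in>A. pmeet2 B (h a) b = pbot B})"

lemma lower_adj_closed: "lower_adj b \<in> A" unfolding lower_adj_def by (rule A.pneg_closed)

lemma le_hom_lower_adj:
  assumes b: "b \<in> B"
  shows "b \<le> h (lower_adj b)"
proof -
  let ?C = "{a\<in>A. pmeet2 B (h a) b = pbot B}"
  have CA: "?C \<subseteq> A" by blast
  have c: "pjoin A ?C \<in> A" using A.pjoin_closed CA .
  have hC: "h ` ?C \<subseteq> B" using hom_closed by blast
  have "pmeet2 B b (h (pjoin A ?C)) = pmeet2 B b (pjoin B (h ` ?C))" using hom_pjoin CA by simp
  also have "\<dots> = pjoin B ((\<lambda>x. pmeet2 B b x) ` h ` ?C)" using B.pmeet2_pjoin_distrib b hC by blast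
  also have "\<dots> \<le> pbot B"
  proof (rule B.pjoin_least)
    show "(\<lambda>x. pmeet2 B b x) ` h ` ?C \<subseteq> B" using B.pmeet2_closed b hC by blast
    show "pbot B \<in> B" by (rule B.pbot_closed)
    fix y assume "y \<in> (\<lambda>x. pmeet2 B b x) ` h ` ?C"
    then obtain a where a: "a \<in> ?C" "y = pmeet2 B b (h a)" by blast
    have "pmeet2 B b (h a) = pmeet2 B (h a) b" by (rule B.pmeet2_commute)
    thus "y \<le> pbot B" using a by simp
  qed
  finally have "pmeet2 B b (h (pjoin A ?C)) = pbot B"
    using B.le_pbot_iff B.pmeet2_closed b hom_closed c by blast
  hence "b \<le> pneg B (h (pjoin A ?C))" using B.le_pneg_iff b hom_closed c by blast
  thus ?thesis unfolding lower_adj_def using hom_pneg c by simp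
qed

lemma lower_adj_least:
  assumes b: "b \<in> B" and x: "x \<in> A" and le: "b \<le> h x"
  shows "lower_adj b \<le> x"
proof -
  let ?C = "{a\<in>A. pmeet2 B (h a) b = pbot B}"
  have CA: "?C \<subseteq> A" by blast
  have nx: "pneg A x \<in> A" by (rule A.pneg_closed)
  have "pmeet2 B (h (pneg A x)) b \<le> pmeet2 B (pneg B (h x)) (h x)"
    using hom_pneg x le b hom_closed B.pneg_closed by (intro B.pmeet2_mono) auto
  also have "\<dots> = pbot B" using B.pmeet2_pneg_left hom_closed x by blast
  finally have "pmeet2 B (h (pneg A x)) b = pbot B"
    using B.le_pbot_iff B.pmeet2_closed hom_closed nx b by blast
  hence "pneg A x \<in> ?C" using nx by blast
  hence "pneg A x \<le> pjoin A ?C" using A.pjoin_upper CA by blast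
  hence "pneg A (pjoin A ?C) \<le> pneg A (pneg A x)"
    using A.pneg_antimono A.pjoin_closed CA nx by blast
  thus ?thesis unfolding lower_adj_def using A.pneg_pneg x by simp
qed

lemma down_image_carrier: "down_image A = B"
proof
  show "down_image A \<subseteq> B" unfolding down_image_def by blast
  show "B \<subseteq> down_image A"
  proof
    fix b assume "b \<in> B"
    hence "b \<le> h (ptop A)" using hom_ptop B.le_ptop by simp
    thus "b \<in> down_image A" unfolding down_image_def using \<open>b \<in> B\<close> A.ptop_closed by blast
  qed
qed

lemma down_image_Int:
  assumes I: "I \<in> Idl A" and J: "J \<in> Idl A"
  shows "down_image (I \<inter> J) = down_image I \<inter> down_image J"
proof
  show "down_image (I \<inter> J) \<subseteq> down_image I \<inter> down_image J" unfolding down_image_def by blast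
  show "down_image I \<inter> down_image J \<subseteq> down_image (I \<inter> J)"
  proof
    fix b assume "b \<in> down_image I \<inter> down_image J"
    then obtain i j where ij: "b \<in> B" "i \<in> I" "b \<le> h i" "j \<in> J" "b \<le> h j"
      unfolding down_image_def by blast
    have iA: "i \<in> A" "j \<in> A" using ij A.IdlD(1)[OF I] A.IdlD(1)[OF J] by auto
    have "b \<le> pmeet2 B (h i) (h j)" using ij B.le_pmeet2_iff hom_closed iA by blast
    hence "b \<le> h (pmeet2 A i j)" using hom_pmeet2 iA by simp
    moreover have "pmeet2 A i j \<in> I \<inter> J"
      using A.IdlD(2)[OF I] A.IdlD(2)[OF J] ij A.pmeet2_closed iA A.pmeet2_lower1 A.pmeet2_lower2
        by blast
    ultimately show "b \<in> down_image (I \<inter> J)" unfolding down_image_def using ij by blast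
  qed
qed

lemma down_image_mono: "I \<subseteq> J \<Longrightarrow> down_image I \<subseteq> down_image J" unfolding down_image_def by blast

lemma down_image_ideal_gen:
  assumes X: "XX \<subseteq> Idl A"
  shows "down_image (A.ideal_gen (\<Union>XX)) = B.ideal_gen (\<Union>(down_image ` XX))"
proof
  have US: "\<Union>XX \<subseteq> A" using X A.IdlD(1) by blast
  show "down_image (A.ideal_gen (\<Union>XX)) \<subseteq> B.ideal_gen (\<Union>(down_image ` XX))"
  proof
    fix b assume "b \<in> down_image (A.ideal_gen (\<Union>XX))"
    then obtain a where a: "b \<in> B" "a \<in> A.ideal_gen (\<Union>XX)" "b \<le> h a"
      unfolding down_image_def by blast
    then obtain F where F: "a \<in> A" "finite F" "F \<subseteq> \<Union>XX" "a \<le> pjoin A F"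
      unfolding A.ideal_gen_def by blast
    have FA: "F \<subseteq> A" using F US by blast
    have "h a \<le> h (pjoin A F)" using hom_mono F A.pjoin_closed FA by blast
    also have "\<dots> = pjoin B (h ` F)" using hom_pjoin FA by blast
    finally have hb: "h a \<le> pjoin B (h ` F)" .
    have "b \<le> pjoin B (h ` F)" using a(3) hb by (rule order_trans)
    moreover have "h ` F \<subseteq> \<Union>(down_image ` XX)"
    proof
      fix y assume "y \<in> h ` F"
      then obtain f where f: "f \<in> F" "y = h f" by blast
      then obtain I where I: "I \<in> XX" "f \<in> I" using F by blast
      have "y \<in> down_image I" unfolding down_image_def using f I hom_closed FA by blast
      thus "y \<in> \<Union>(down_image ` XX)" using I by blast
    qed
    moreover have "finite (h ` F)" using F by blast
    ultimately show "b \<in> B.ideal_gen (\<Union>(down_image ` XX))" unfolding B.ideal_gen_def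
      using a by blast
  qed
  show "B.ideal_gen (\<Union>(down_image ` XX)) \<subseteq> down_image (A.ideal_gen (\<Union>XX))"
  proof (rule B.ideal_gen_least)
    show "down_image (A.ideal_gen (\<Union>XX)) \<in> Idl B" using down_image_Idl A.ideal_gen_Idl US by blast
    show "\<Union>(down_image ` XX) \<subseteq> down_image (A.ideal_gen (\<Union>XX))"
      using down_image_mono A.ideal_gen_upper US by blast
  qed
qed

lemma down_image_Inter:
  assumes X: "XX \<subseteq> Idl A"
  shows "down_image (A \<inter> \<Inter>XX) = B \<inter> \<Inter>(down_image ` XX)"
proof
  show "down_image (A \<inter> \<Inter>XX) \<subseteq> B \<inter> \<Inter>(down_image ` XX)" unfolding down_image_def by blast
  show "B \<inter> \<Inter>(down_image ` XX) \<subseteq> down_image (A \<inter> \<Inter>XX)"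
  proof
    fix b assume b: "b \<in> B \<inter> \<Inter>(down_image ` XX)"
    have "lower_adj b \<in> I" if I: "I \<in> XX" for I
    proof -
      obtain i where i: "i \<in> I" "b \<le> h i" using b I unfolding down_image_def by blast
      have iA: "i \<in> A" using i X I A.IdlD(1) by blast
      have "lower_adj b \<le> i" using lower_adj_least b iA i by blast
      thus ?thesis using A.IdlD(2)[of I] I X i lower_adj_closed by blast
    qed
    thus "b \<in> down_image (A \<inter> \<Inter>XX)" unfolding down_image_def
      using b lower_adj_closed le_hom_lower_adj by blast
  qed
qed

lemma lower_adj_pmeet2_mem:
  assumes I: "I \<in> Idl A" and J: "J \<in> Idl A" and b: "b \<in> B"
    and bIJ: "\<forall>c\<in>down_image I. pmeet2 B b c \<in> down_image J" and i: "i \<in> I"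
  shows "pmeet2 A (lower_adj b) i \<in> J"
proof -
  have iA: "i \<in> A" using i A.IdlD(1)[OF I] by blast
  have "h i \<in> down_image I" unfolding down_image_def using i hom_closed iA by blast
  then obtain j where j: "j \<in> J" "pmeet2 B b (h i) \<le> h j"
    using bIJ unfolding down_image_def by blast
  have jA: "j \<in> A" using j A.IdlD(1)[OF J] by blast
  have ni: "pneg A i \<in> A" by (rule A.pneg_closed)
  have hi: "h i \<in> B" "h j \<in> B" "pneg B (h i) \<in> B" using hom_closed iA jA B.pneg_closed by auto
  have "b = pmeet2 B b (pjoin2 B (h i) (pneg B (h i)))"
    using B.pjoin2_pneg hi B.pmeet2_ptop_right b by simp
  also have "\<dots> = pjoin2 B (pmeet2 B b (h i)) (pmeet2 B b (pneg B (h i)))"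
    using B.pmeet2_pjoin2_distrib b hi by blast
  also have "\<dots> \<le> pjoin2 B (h j) (pneg B (h i))"
    using j hi b B.pmeet2_closed B.pmeet2_lower2 by (intro B.pjoin2_mono) auto
  also have "\<dots> = h (pjoin2 A j (pneg A i))" using hom_pjoin2 jA ni hom_pneg iA by simp
  finally have "lower_adj b \<le> pjoin2 A j (pneg A i)"
    using lower_adj_least b A.pjoin2_closed jA ni by blast
  hence "pmeet2 A (lower_adj b) i \<le> pmeet2 A i (pjoin2 A j (pneg A i))"
    using lower_adj_closed iA A.pjoin2_closed jA ni A.pmeet2_commute
    by (metis A.pmeet2_mono order_refl)
  also have "\<dots> = pmeet2 A i j"
    using A.pmeet2_pjoin2_distrib A.pmeet2_pneg_right A.pjoin2_pbot_right A.pmeet2_closed iA jA ni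
    by simp
  also have "\<dots> \<le> j" using A.pmeet2_lower2 iA jA by blast
  finally show ?thesis using A.IdlD(2)[OF J] j A.pmeet2_closed lower_adj_closed iA by blast
qed

lemma down_image_himp:
  assumes I: "I \<in> Idl A" and J: "J \<in> Idl A"
  shows "down_image {a\<in>A. \<forall>i\<in>I. pmeet2 A a i \<in> J} =
    {b\<in>B. \<forall>c\<in>down_image I. pmeet2 B b c \<in> down_image J}"
proof (intro set_eqI iffI)
  fix b assume "b \<in> down_image {a\<in>A. \<forall>i\<in>I. pmeet2 A a i \<in> J}"
  then obtain a where a: "b \<in> B" "a \<in> A" "\<forall>i\<in>I. pmeet2 A a i \<in> J" "b \<le> h a"
    unfolding down_image_def by blast
  have "pmeet2 B b c \<in> down_image J" if c: "c \<in> down_image I" for c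
  proof -
    obtain i where i: "c \<in> B" "i \<in> I" "c \<le> h i" using c unfolding down_image_def by blast
    have iA: "i \<in> A" using i A.IdlD(1)[OF I] by blast
    have "pmeet2 B b c \<le> pmeet2 B (h a) (h i)" using a i hom_closed iA by (intro B.pmeet2_mono) auto
    also have "\<dots> = h (pmeet2 A a i)" using hom_pmeet2 a iA by simp
    finally show ?thesis unfolding down_image_def using a i B.pmeet2_closed by blast
  qed
  thus "b \<in> {b\<in>B. \<forall>c\<in>down_image I. pmeet2 B b c \<in> down_image J}" using a by blast
next
  fix b assume "b \<in> {b\<in>B. \<forall>c\<in>down_image I. pmeet2 B b c \<in> down_image J}"
  hence "lower_adj b \<in> {a\<in>A. \<forall>i\<in>I. pmeet2 A a i \<in> J}" "b \<in> B"
    using lower_adj_pmeet2_mem[OF I J] lower_adj_closed by auto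
  thus "b \<in> down_image {a\<in>A. \<forall>i\<in>I. pmeet2 A a i \<in> J}"
    unfolding down_image_def using le_hom_lower_adj by blast
qed

lemma open_frame_hom_ideal_map: "open_frame_hom (Idl A) (Idl B) (ideal_map A B h)"
proof -
  interpret IA: frame_on "Idl A" by (rule A.frame_on_Idl)
  have im: "ideal_map A B h ` X = down_image ` X" if "X \<subseteq> Idl A" for X
    using that ideal_map_eq_down_image by auto
  have DX: "down_image ` X \<subseteq> Idl B" if "X \<subseteq> Idl A" for X using that down_image_Idl by blast
  show ?thesis
  proof (rule open_frame_homI)
    show "ideal_map A B h I \<in> Idl B" if "I \<in> Idl A" for I
      using that ideal_map_eq_down_image down_image_Idl by simp
    show "ideal_map A B h (ptop (Idl A)) = ptop (Idl B)"
      using ideal_map_eq_down_image A.Idl_ptop B.Idl_ptop down_image_carrier A.carrier_Idl by simp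
    show "ideal_map A B h (pmeet2 (Idl A) I J) = pmeet2 (Idl B) (ideal_map A B h I) (ideal_map A B h J)"
      if "I \<in> Idl A" "J \<in> Idl A" for I J
      using that ideal_map_eq_down_image A.Idl_pmeet2 B.Idl_pmeet2 down_image_Int A.Idl_Int down_image_Idl
      by simp
    show "ideal_map A B h (pjoin (Idl A) X) = pjoin (Idl B) (ideal_map A B h ` X)" if X: "X \<subseteq> Idl A" for X
      using ideal_map_eq_down_image[OF IA.pjoin_closed[OF X]] A.Idl_pjoin[OF X] B.Idl_pjoin[OF DX[OF X]]
        im[OF X] down_image_ideal_gen[OF X] by simp
    show "ideal_map A B h (pmeet (Idl A) X) = pmeet (Idl B) (ideal_map A B h ` X)" if X: "X \<subseteq> Idl A" for X
      using ideal_map_eq_down_image[OF IA.pmeet_closed[OF X]] A.Idl_pmeet[OF X] B.Idl_pmeet[OF DX[OF X]]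
        im[OF X] down_image_Inter[OF X] by simp
    show "ideal_map A B h (himp (Idl A) I J) = himp (Idl B) (ideal_map A B h I) (ideal_map A B h J)"
      if I: "I \<in> Idl A" and J: "J \<in> Idl A" for I J
      using ideal_map_eq_down_image[OF IA.himp_closed[of I J]] ideal_map_eq_down_image[OF I]
        ideal_map_eq_down_image[OF J] A.Idl_himp[OF I J]
        B.Idl_himp[OF down_image_Idl[OF I] down_image_Idl[OF J]]
        down_image_himp[OF I J] by simp
  qed
qed

end

section \<open>Valuations\<close>

lemma cont_valuationD:
  assumes "cont_valuation S \<nu>"
  shows "\<And>x. x \<in> S \<Longrightarrow> 0 \<le> \<nu> x" "\<nu> (pbot S) = 0"
    "\<And>a b. a \<in> S \<Longrightarrow> b \<in> S \<Longrightarrow> \<nu> (pjoin2 S a b) + \<nu> (pmeet2 S a b) = \<nu> a + \<nu> b"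
    "\<And>a b. a \<in> S \<Longrightarrow> b \<in> S \<Longrightarrow> a \<le> b \<Longrightarrow> \<nu> a \<le> \<nu> b"
    "\<And>D. directed_in S D \<Longrightarrow> \<nu> (pjoin S D) = (SUP d\<in>D. \<nu> d)"
  using assms unfolding cont_valuation_def by simp_all

lemma cont_valuationI:
  assumes "\<And>x. x \<in> S \<Longrightarrow> 0 \<le> \<nu> x" "\<nu> (pbot S) = 0"
    "\<And>a b. a \<in> S \<Longrightarrow> b \<in> S \<Longrightarrow> \<nu> (pjoin2 S a b) + \<nu> (pmeet2 S a b) = \<nu> a + \<nu> b"
    "\<And>a b. a \<in> S \<Longrightarrow> b \<in> S \<Longrightarrow> a \<le> b \<Longrightarrow> \<nu> a \<le> \<nu> b"
    "\<And>D. directed_in S D \<Longrightarrow> \<nu> (pjoin S D) = (SUP d\<in>D. \<nu> d)"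
  shows "cont_valuation S \<nu>"
  using assms unfolding cont_valuation_def by simp

lemma directed_inD:
  assumes "directed_in S D"
  shows "D \<subseteq> S" "D \<noteq> {}" "\<And>a b. a \<in> D \<Longrightarrow> b \<in> D \<Longrightarrow> \<exists>c\<in>D. a \<le> c \<and> b \<le> c"
  using assms unfolding directed_in_def by blast+

context cba_on
begin

lemma down_subset: "down l \<subseteq> S"
  unfolding down_def by blast

lemma pjoin_down_eq: "l \<in> S \<Longrightarrow> Y \<subseteq> down l \<Longrightarrow> pjoin (down l) Y = pjoin S Y"
  using down_subset pjoin_least[of Y l] pjoin_closed[of Y]
  by (intro pjoin_subcarrier) (auto simp: down_def)

lemma pjoin2_down_eq: "l \<in> S \<Longrightarrow> x \<in> down l \<Longrightarrow> y \<in> down l \<Longrightarrow> pjoin2 (down l) x y = pjoin2 S x y"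
  unfolding pjoin2_def by (rule pjoin_down_eq) auto

lemma pbot_down: "l \<in> S \<Longrightarrow> pbot (down l) = pbot S"
  unfolding pbot_def by (rule pjoin_down_eq) auto

lemma pmeet2_down_eq: "l \<in> S \<Longrightarrow> x \<in> down l \<Longrightarrow> y \<in> down l \<Longrightarrow> pmeet2 (down l) x y = pmeet2 S x y"
  using down_subset pmeet2_closed order_trans[OF pmeet2_lower1]
  by (intro pmeet2_subcarrier) (auto simp: down_def)

lemma pmeet2_down: "l \<in> S \<Longrightarrow> x \<in> S \<Longrightarrow> pmeet2 S l x \<in> down l"
  unfolding down_def using pmeet2_closed pmeet2_lower1 by blast

lemma Idl_pjoin_directed:
  assumes D: "directed_in (Idl S) DD"
  shows "pjoin (Idl S) DD = \<Union>DD"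
proof (rule pjoin_eqI)
  note d = directed_inD[OF D]
  show "\<Union>DD \<in> Idl S"
  proof (rule IdlI)
    show "\<Union>DD \<subseteq> S" "\<And>x y. x \<in> \<Union>DD \<Longrightarrow> y \<in> S \<Longrightarrow> y \<le> x \<Longrightarrow> y \<in> \<Union>DD"
      using d(1) IdlD(1,2) by blast+
    show "pbot S \<in> \<Union>DD" using d(1,2) IdlD(3) by blast
    fix x y assume "x \<in> \<Union>DD" "y \<in> \<Union>DD"
    then obtain X Y where XY: "X \<in> DD" "Y \<in> DD" "x \<in> X" "y \<in> Y" by blast
    then obtain Z where "Z \<in> DD" "X \<subseteq> Z" "Y \<subseteq> Z" using d(3) by blast
    thus "pjoin2 S x y \<in> \<Union>DD" using IdlD(4)[of Z] d(1) XY by blast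
  qed
qed auto

lemma pjoin_Idl_pjoin2:
  assumes I: "I \<in> Idl S" and J: "J \<in> Idl S"
  shows "pjoin S (pjoin2 (Idl S) I J) = pjoin2 S (pjoin S I) (pjoin S J)"
proof -
  have IS: "I \<subseteq> S" "J \<subseteq> S" using IdlD(1) I J by auto
  have JI: "pjoin S I \<in> S" "pjoin S J \<in> S" using pjoin_closed IS by auto
  let ?K = "{a\<in>S. \<exists>i\<in>I. \<exists>j\<in>J. a \<le> pjoin2 S i j}"
  have KS: "?K \<subseteq> S" by blast
  have IK: "I \<subseteq> ?K"
  proof
    fix x assume x: "x \<in> I"
    hence "x \<le> pjoin2 S x (pbot S)" using pjoin2_upper1 IS pbot_closed by blast
    thus "x \<in> ?K" using x IS IdlD(3)[OF J] by blast
  qed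
  have JK: "J \<subseteq> ?K"
  proof
    fix x assume x: "x \<in> J"
    hence "x \<le> pjoin2 S (pbot S) x" using pjoin2_upper2 IS pbot_closed by blast
    thus "x \<in> ?K" using x IS IdlD(3)[OF I] by blast
  qed
  have "pjoin S ?K = pjoin2 S (pjoin S I) (pjoin S J)"
  proof (rule antisym)
    show "pjoin S ?K \<le> pjoin2 S (pjoin S I) (pjoin S J)"
    proof (rule pjoin_least[OF KS])
      show "pjoin2 S (pjoin S I) (pjoin S J) \<in> S" using pjoin2_closed JI by blast
      fix x assume "x \<in> ?K"
      then obtain i j where ij: "x \<in> S" "i \<in> I" "j \<in> J" "x \<le> pjoin2 S i j" by blast
      have "pjoin2 S i j \<le> pjoin2 S (pjoin S I) (pjoin S J)"
        using ij IS JI pjoin_upper by (intro pjoin2_mono) auto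
      thus "x \<le> pjoin2 S (pjoin S I) (pjoin S J)" using ij(4) by (rule order_trans[rotated])
    qed
    have "pjoin S I \<le> pjoin S ?K" "pjoin S J \<le> pjoin S ?K" using pjoin_mono IK JK KS by auto
    thus "pjoin2 S (pjoin S I) (pjoin S J) \<le> pjoin S ?K"
      using pjoin2_le_iff JI pjoin_closed KS by blast
  qed
  thus ?thesis using Idl_pjoin2[OF I J] by simp
qed

lemma pjoin_Idl_pmeet2:
  assumes I: "I \<in> Idl S" and J: "J \<in> Idl S"
  shows "pjoin S (pmeet2 (Idl S) I J) = pmeet2 S (pjoin S I) (pjoin S J)"
proof -
  have IS: "I \<subseteq> S" "J \<subseteq> S" using IdlD(1) I J by auto
  have JI: "pjoin S I \<in> S" "pjoin S J \<in> S" using pjoin_closed IS by auto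
  have IJ: "I \<inter> J \<subseteq> S" using IS by auto
  hence IJ': "pjoin S (I \<inter> J) \<in> S" by (rule pjoin_closed)
  have meet_le: "pmeet2 S i j \<le> pjoin S (I \<inter> J)" if "i \<in> I" "j \<in> J" for i j
    using that IS IdlD(2)[OF I] IdlD(2)[OF J] pmeet2_closed pmeet2_lower1 pmeet2_lower2
    by (intro pjoin_upper[OF IJ]) blast
  have i_le: "pmeet2 S i (pjoin S J) \<le> pjoin S (I \<inter> J)" if i: "i \<in> I" for i
  proof -
    have iS: "i \<in> S" using i IS by blast
    have "pmeet2 S i (pjoin S J) = pjoin S ((\<lambda>j. pmeet2 S i j) ` J)"
      using pmeet2_pjoin_distrib iS IS(2) by blast
    also have "\<dots> \<le> pjoin S (I \<inter> J)"
      using meet_le[OF i] pmeet2_closed iS IS(2) IJ' by (intro pjoin_least) auto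
    finally show ?thesis .
  qed
  have "pmeet2 S (pjoin S J) (pjoin S I) = pjoin S ((\<lambda>i. pmeet2 S (pjoin S J) i) ` I)"
    using pmeet2_pjoin_distrib JI(2) IS(1) by blast
  also have "\<dots> \<le> pjoin S (I \<inter> J)"
    using i_le pmeet2_commute[of "pjoin S J"] pmeet2_closed JI(2) IS(1) IJ'
    by (intro pjoin_least) auto
  finally have "pmeet2 S (pjoin S J) (pjoin S I) \<le> pjoin S (I \<inter> J)" .
  moreover have "pjoin S (I \<inter> J) \<le> pmeet2 S (pjoin S I) (pjoin S J)"
    using pjoin_mono[of "I \<inter> J"] IS le_pmeet2_iff JI IJ' by auto
  ultimately show ?thesis
    using Idl_pmeet2[OF I J] pmeet2_commute[of "pjoin S J"] by (simp add: antisym)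
qed

lemma directed_pmeet2_image:
  assumes l: "l \<in> S" and U: "U \<in> Idl S"
  shows "directed_in (down l) ((\<lambda>u. pmeet2 S l u) ` U)"
  unfolding directed_in_def
proof (intro conjI ballI)
  have US: "U \<subseteq> S" using IdlD(1)[OF U] .
  show "(\<lambda>u. pmeet2 S l u) ` U \<subseteq> down l" using pmeet2_down l US by blast
  show "(\<lambda>u. pmeet2 S l u) ` U \<noteq> {}" using IdlD(3)[OF U] by blast
  fix a b assume "a \<in> (\<lambda>u. pmeet2 S l u) ` U" "b \<in> (\<lambda>u. pmeet2 S l u) ` U"
  then obtain u v where uv: "u \<in> U" "v \<in> U" "a = pmeet2 S l u" "b = pmeet2 S l v" by blast
  have uvS: "u \<in> S" "v \<in> S" using uv US by auto
  have "a \<le> pmeet2 S l (pjoin2 S u v)" "b \<le> pmeet2 S l (pjoin2 S u v)"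
    using uv uvS l pjoin2_closed pjoin2_upper1 pjoin2_upper2 by (auto intro!: pmeet2_mono)
  thus "\<exists>c\<in>(\<lambda>u. pmeet2 S l u) ` U. a \<le> c \<and> b \<le> c" using IdlD(4)[OF U] uv by blast
qed

definition ideal_valuation :: "('a \<Rightarrow> real) \<Rightarrow> 'a \<Rightarrow> 'a set \<Rightarrow> real" where
  "ideal_valuation \<mu> l I = \<mu> (pmeet2 S l (pjoin S I))"

context
  fixes l \<mu>
  assumes l: "l \<in> S" and mu: "cont_valuation (down l) \<mu>"
begin

lemma valuation_pmeet2_mono:
  assumes "x \<in> S" "y \<in> S" "x \<le> y"
  shows "\<mu> (pmeet2 S l x) \<le> \<mu> (pmeet2 S l y)"
proof -
  have "pmeet2 S l x \<le> pmeet2 S l y" using assms l by (intro pmeet2_mono) auto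
  thus ?thesis
    by (rule cont_valuationD(4)[OF mu pmeet2_down[OF l assms(1)] pmeet2_down[OF l assms(2)]])
qed

lemma valuation_pmeet2_le: "x \<in> S \<Longrightarrow> \<mu> (pmeet2 S l x) \<le> \<mu> l"
  using cont_valuationD(4)[OF mu pmeet2_down[OF l]] l pmeet2_lower1 unfolding down_def by blast

lemma ideal_valuation_mono:
  assumes "I \<in> Idl S" "J \<in> Idl S" "I \<subseteq> J"
  shows "ideal_valuation \<mu> l I \<le> ideal_valuation \<mu> l J"
  unfolding ideal_valuation_def
  using assms IdlD(1) by (intro valuation_pmeet2_mono pjoin_closed pjoin_mono) auto

lemma ideal_valuation_modular:
  assumes I: "I \<in> Idl S" and J: "J \<in> Idl S"
  shows "ideal_valuation \<mu> l (pjoin2 (Idl S) I J) + ideal_valuation \<mu> l (pmeet2 (Idl S) I J) =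
    ideal_valuation \<mu> l I + ideal_valuation \<mu> l J"
proof -
  let ?x = "pjoin S I" and ?y = "pjoin S J"
  have xy: "?x \<in> S" "?y \<in> S" using pjoin_closed IdlD(1) I J by auto
  have a: "pmeet2 S l ?x \<in> down l" "pmeet2 S l ?y \<in> down l" using pmeet2_down l xy by auto
  have "ideal_valuation \<mu> l (pjoin2 (Idl S) I J) = \<mu> (pjoin2 (down l) (pmeet2 S l ?x) (pmeet2 S l ?y))"
    unfolding ideal_valuation_def pjoin_Idl_pjoin2[OF I J]
    using pmeet2_pjoin2_distrib l xy pjoin2_down_eq a by simp
  moreover have "ideal_valuation \<mu> l (pmeet2 (Idl S) I J) =
      \<mu> (pmeet2 (down l) (pmeet2 S l ?x) (pmeet2 S l ?y))"
    unfolding ideal_valuation_def pjoin_Idl_pmeet2[OF I J]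
    using pmeet2_pmeet2_distrib l xy pmeet2_down_eq a by simp
  ultimately show ?thesis
    using cont_valuationD(3)[OF mu a] unfolding ideal_valuation_def by simp
qed

lemma ideal_valuation_directed:
  assumes D: "directed_in (Idl S) DD"
  shows "ideal_valuation \<mu> l (pjoin (Idl S) DD) = (SUP I\<in>DD. ideal_valuation \<mu> l I)"
proof -
  note d = directed_inD[OF D]
  let ?\<nu> = "ideal_valuation \<mu> l" and ?U = "\<Union>DD"
  have U: "pjoin (Idl S) DD = ?U" using Idl_pjoin_directed D .
  have UI: "?U \<in> Idl S"
    using complete_lattice_on.pjoin_closed[OF complete_lattice_on.intro[OF Idl_complete] d(1)] U
      by simp
  have US: "?U \<subseteq> S" using IdlD(1)[OF UI] .
  let ?Y = "(\<lambda>u. pmeet2 S l u) ` ?U"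
  have Ydir: "directed_in (down l) ?Y" using directed_pmeet2_image[OF l UI] .
  have "?Y \<subseteq> down l" using pmeet2_down l US by blast
  hence "pmeet2 S l (pjoin S ?U) = pjoin (down l) ?Y"
    using pmeet2_pjoin_distrib[OF l US] pjoin_down_eq[OF l] by simp
  hence eq: "?\<nu> ?U = (SUP y\<in>?Y. \<mu> y)"
    unfolding ideal_valuation_def using cont_valuationD(5)[OF mu Ydir] by simp
  have "?\<nu> I \<le> \<mu> l" if "I \<in> DD" for I
    unfolding ideal_valuation_def using valuation_pmeet2_le pjoin_closed IdlD(1) d(1) that by blast
  hence bdd: "bdd_above (?\<nu> ` DD)" by (intro bdd_aboveI2)
  have "(SUP y\<in>?Y. \<mu> y) \<le> (SUP I\<in>DD. ?\<nu> I)"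
  proof (rule cSUP_least)
    show "?Y \<noteq> {}" using directed_inD(2)[OF Ydir] .
    fix y assume "y \<in> ?Y"
    then obtain u I where uI: "I \<in> DD" "u \<in> I" "y = pmeet2 S l u" by blast
    have IS: "I \<subseteq> S" using uI d(1) IdlD(1) by blast
    have "\<mu> y \<le> ?\<nu> I"
      unfolding ideal_valuation_def uI(3)
      using IS uI(2) by (intro valuation_pmeet2_mono pjoin_closed pjoin_upper) auto
    also have "\<dots> \<le> (SUP I\<in>DD. ?\<nu> I)" using cSUP_upper[OF uI(1) bdd] .
    finally show "\<mu> y \<le> (SUP I\<in>DD. ?\<nu> I)" .
  qed
  moreover have "(SUP I\<in>DD. ?\<nu> I) \<le> ?\<nu> ?U"
  proof (rule cSUP_least)
    show "DD \<noteq> {}" by (rule d(2))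
    show "?\<nu> I \<le> ?\<nu> ?U" if "I \<in> DD" for I
      using ideal_valuation_mono that d(1) UI by blast
  qed
  ultimately show ?thesis unfolding U using eq by linarith
qed

lemma cont_valuation_ideal_valuation: "cont_valuation (Idl S) (ideal_valuation \<mu> l)"
proof (rule cont_valuationI)
  show "0 \<le> ideal_valuation \<mu> l I" if "I \<in> Idl S" for I
    unfolding ideal_valuation_def
    using cont_valuationD(1)[OF mu pmeet2_down[OF l pjoin_closed[OF IdlD(1)[OF that]]]] .
  have "pjoin S {pbot S} = pbot S" using pbot_closed by (intro pjoin_eq_greatest) auto
  thus "ideal_valuation \<mu> l (pbot (Idl S)) = 0"
    unfolding ideal_valuation_def Idl_pbot
    using pmeet2_pbot_right l pbot_down cont_valuationD(2)[OF mu] by simp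
next
  show "ideal_valuation \<mu> l (pjoin2 (Idl S) I J) + ideal_valuation \<mu> l (pmeet2 (Idl S) I J) =
      ideal_valuation \<mu> l I + ideal_valuation \<mu> l J" if "I \<in> Idl S" "J \<in> Idl S" for I J
    using ideal_valuation_modular that .
  show "ideal_valuation \<mu> l I \<le> ideal_valuation \<mu> l J" if "I \<in> Idl S" "J \<in> Idl S" "I \<le> J" for I J
    using ideal_valuation_mono that .
  show "ideal_valuation \<mu> l (pjoin (Idl S) DD) = (SUP I\<in>DD. ideal_valuation \<mu> l I)"
    if "directed_in (Idl S) DD" for DD
    using ideal_valuation_directed that .
qed

lemma normal_valuation_ideal_valuation: "normal_valuation (Idl S) (ideal_valuation \<mu> l)"
  unfolding normal_valuation_def ideal_valuation_def
  using Idl_pneg_pneg pjoin_down pjoin_closed IdlD(1) by simp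

end

end

context cba_on
begin

lemma hyperstonean_Idl:
  assumes loc: "localizable S"
  shows "hyperstonean (Idl S)"
proof -
  let ?L = "{a\<in>S. \<exists>\<nu>. cont_valuation {b\<in>S. b \<le> a} \<nu> \<and> (\<forall>b\<in>S. b \<le> a \<longrightarrow> \<nu> b = 0 \<longrightarrow> b = pbot S)}"
  have top: "pjoin S ?L = ptop S" using loc unfolding localizable_def by simp
  have "\<exists>\<nu>. cont_valuation (Idl S) \<nu> \<and> normal_valuation (Idl S) \<nu> \<and> \<nu> K \<noteq> 0"
    if K: "K \<in> Idl S" "K \<noteq> pbot (Idl S)" for K
  proof -
    have KS: "K \<subseteq> S" using IdlD(1)[OF K(1)] .
    have "K \<noteq> {pbot S}" using K(2) Idl_pbot by simp
    then obtain a where a: "a \<in> K" "a \<noteq> pbot S" using IdlD(3)[OF K(1)] by blast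
    have aS: "a \<in> S" using a KS by blast
    obtain l where l: "l \<in> ?L" "pmeet2 S l a \<noteq> pbot S"
      using pmeet2_ne_pbot_if_pjoin_ptop[of ?L a] top aS a by blast
    then obtain \<mu> where mu: "cont_valuation (down l) \<mu>" "\<forall>b\<in>S. b \<le> l \<longrightarrow> \<mu> b = 0 \<longrightarrow> b = pbot S"
      unfolding down_def by blast
    have lS: "l \<in> S" using l by blast
    have "\<mu> (pmeet2 S l a) \<noteq> 0" using mu(2) l(2) pmeet2_closed pmeet2_lower1 lS aS by blast
    moreover have "0 \<le> \<mu> (pmeet2 S l a)" using cont_valuationD(1)[OF mu(1) pmeet2_down[OF lS aS]] .
    moreover have "\<mu> (pmeet2 S l a) \<le> ideal_valuation \<mu> l K"
      unfolding ideal_valuation_def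
      using a(1) KS aS by (intro valuation_pmeet2_mono[OF lS mu(1)] pjoin_closed pjoin_upper) auto
    ultimately have "ideal_valuation \<mu> l K \<noteq> 0" by linarith
    thus ?thesis
      using cont_valuation_ideal_valuation[OF lS mu(1)] normal_valuation_ideal_valuation[OF lS mu(1)]
      by blast
  qed
  thus ?thesis unfolding hyperstonean_def using stonean_Idl by blast
qed

end

context stonean_on
begin

sublocale CO: cba_on B by (rule cba_on_COpen)

lemma valuation_null_COpen_pjoin:
  assumes \<nu>: "cont_valuation S \<nu>"
  shows "\<nu> (pjoin S {c\<in>B. \<nu> c = 0}) = 0"
proof -
  note v = cont_valuationD[OF \<nu>]
  let ?N = "{c\<in>B. \<nu> c = 0}"
  have NS: "?N \<subseteq> S" using COpen_subset by blast
  have bN: "pbot S \<in> ?N" using pbot_COpen v(2) by blast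
  have join_N: "pjoin2 S c d \<in> ?N" if cd: "c \<in> ?N" "d \<in> ?N" for c d
  proof -
    have cdS: "c \<in> S" "d \<in> S" using cd COpen_subset by auto
    have "\<nu> (pjoin2 S c d) + \<nu> (pmeet2 S c d) = 0" using v(3)[OF cdS] cd by simp
    moreover have "0 \<le> \<nu> (pjoin2 S c d)" "0 \<le> \<nu> (pmeet2 S c d)"
      using v(1) pjoin2_closed pmeet2_closed cdS by auto
    ultimately have "\<nu> (pjoin2 S c d) = 0" by linarith
    thus ?thesis using pjoin2_COpen cd by blast
  qed
  have "directed_in S ?N" unfolding directed_in_def
  proof (intro conjI ballI)
    show "?N \<subseteq> S" "?N \<noteq> {}" using NS bN by auto
    fix a b assume ab: "a \<in> ?N" "b \<in> ?N"
    hence "a \<in> S" "b \<in> S" using NS by auto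
    hence "a \<le> pjoin2 S a b" "b \<le> pjoin2 S a b" by (rule pjoin2_upper1, rule pjoin2_upper2)
    moreover note ab
    ultimately show "\<exists>c\<in>?N. a \<le> c \<and> b \<le> c" using join_N by blast
  qed
  hence "\<nu> (pjoin S ?N) = (SUP c\<in>?N. \<nu> c)" by (rule v(5))
  also have "\<dots> = (SUP c\<in>?N. 0)" by (rule SUP_cong) auto
  also have "\<dots> = 0" using bN by (intro cSUP_const) blast
  finally show ?thesis .
qed

lemma cont_valuation_COpen_down:
  assumes \<nu>: "cont_valuation S \<nu>" "normal_valuation S \<nu>" and s: "s \<in> B"
  shows "cont_valuation (CO.down s) \<nu>"
proof -
  note v = cont_valuationD[OF \<nu>(1)]
  have LB: "CO.down s \<subseteq> B" and LS: "CO.down s \<subseteq> S" using COpen_subset unfolding CO.down_def by auto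
  show ?thesis
  proof (rule cont_valuationI)
    show "0 \<le> \<nu> x" if "x \<in> CO.down s" for x using that LS v(1) by blast
    show "\<nu> (pbot (CO.down s)) = 0" using CO.pbot_down[OF s] COpen_pbot v(2) by simp
    show "\<nu> (pjoin2 (CO.down s) a b) + \<nu> (pmeet2 (CO.down s) a b) = \<nu> a + \<nu> b"
      if "a \<in> CO.down s" "b \<in> CO.down s" for a b
      using that CO.pjoin2_down_eq[OF s] CO.pmeet2_down_eq[OF s] COpen_pjoin2 COpen_pmeet2 LB LS v(3)
      by (auto simp: subset_iff)
    show "\<nu> a \<le> \<nu> b" if "a \<in> CO.down s" "b \<in> CO.down s" "a \<le> b" for a b
      using that LS v(4) by blast
    show "\<nu> (pjoin (CO.down s) D) = (SUP d\<in>D. \<nu> d)" if D: "directed_in (CO.down s) D" for D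
    proof -
      note d = directed_inD[OF D]
      have DS: "D \<subseteq> S" using d(1) LS by blast
      have "pjoin (CO.down s) D = pneg S (pneg S (pjoin S D))"
        using CO.pjoin_down_eq[OF s d(1)] COpen_pjoin d(1) LB by auto
      hence "\<nu> (pjoin (CO.down s) D) = \<nu> (pjoin S D)"
        using \<nu>(2) pjoin_closed[OF DS] unfolding normal_valuation_def by simp
      also have "\<dots> = (SUP d\<in>D. \<nu> d)" using v(5) d DS unfolding directed_in_def by blast
      finally show ?thesis .
    qed
  qed
qed

lemma null_below_pneg_null_join:
  assumes c: "c \<in> B" "c \<le> pneg S (pjoin S {c\<in>B. \<nu> c = 0})" "\<nu> c = 0"
  shows "c = pbot B"
proof -
  let ?n = "pjoin S {c\<in>B. \<nu> c = 0}"
  have NS: "{c\<in>B. \<nu> c = 0} \<subseteq> S" using COpen_subset by blast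
  have nS: "?n \<in> S" using pjoin_closed NS .
  have cS: "c \<in> S" using c COpen_subset by blast
  have "c \<le> ?n" using pjoin_upper[OF NS] c by blast
  hence "c \<le> pmeet2 S ?n (pneg S ?n)" using c(2) le_pmeet2_iff[OF nS pneg_closed cS] by blast
  thus "c = pbot B" using pmeet2_pneg_right[OF nS] COpen_pbot le_pbot_iff[OF cS] by simp
qed

text \<open>If the join t of the localizable elements were not \<top>, a normal valuation \<nu> with \<nu> (\<not>t) \<noteq> 0
  yields the localizable element \<not>n, where n is the join of the \<nu>-null compact opens; then
  \<not>t \<le> \<not>\<not>n, and normality gives \<nu> (\<not>t) \<le> \<nu> n = 0.\<close>

lemma localizable_COpen_if_valuations:
  assumes hv: "\<forall>a\<in>S. a \<noteq> pbot S \<longrightarrow> (\<exists>\<nu>. cont_valuation S \<nu> \<and> normal_valuation S \<nu> \<and> \<nu> a \<noteq> 0)"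
  shows "localizable B"
proof -
  let ?Loc = "{a\<in>B. \<exists>\<nu>. cont_valuation {b\<in>B. b \<le> a} \<nu> \<and> (\<forall>b\<in>B. b \<le> a \<longrightarrow> \<nu> b = 0 \<longrightarrow> b = pbot B)}"
  let ?t = "pjoin B ?Loc"
  have tB: "?t \<in> B" by (rule CO.pjoin_closed) blast
  have tS: "?t \<in> S" using tB COpen_subset by blast
  have "?t = ptop S"
  proof (rule ccontr)
    assume nt: "?t \<noteq> ptop S"
    have "pneg S ?t \<noteq> pbot S"
    proof
      assume "pneg S ?t = pbot S"
      hence "pneg S (pneg S ?t) = ptop S" using pneg_pbot by simp
      thus False using pneg_pneg_COpen[OF tB] nt by simp
    qed
    then obtain \<nu> where nu: "cont_valuation S \<nu>" "normal_valuation S \<nu>" "\<nu> (pneg S ?t) \<noteq> 0"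
      using hv pneg_closed[of ?t] by blast
    let ?N = "{c\<in>B. \<nu> c = 0}"
    let ?n = "pjoin S ?N"
    have NS: "?N \<subseteq> S" using COpen_subset by blast
    have nS: "?n \<in> S" using pjoin_closed NS .
    have sB: "pneg S ?n \<in> B" using pneg_COpen nS by blast
    have faithful: "\<forall>b\<in>B. b \<le> pneg S ?n \<longrightarrow> \<nu> b = 0 \<longrightarrow> b = pbot B"
      using null_below_pneg_null_join by blast
    have "cont_valuation {b\<in>B. b \<le> pneg S ?n} \<nu>"
      using cont_valuation_COpen_down[OF nu(1,2) sB] unfolding CO.down_def .
    hence "pneg S ?n \<in> ?Loc" using sB faithful by (intro CollectI conjI exI[of _ \<nu>])
    hence "pneg S ?n \<le> ?t" by (rule CO.pjoin_upper[rotated]) blast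
    hence "pneg S ?t \<le> pneg S (pneg S ?n)" using pneg_antimono[OF pneg_closed tS] by blast
    hence "\<nu> (pneg S ?t) \<le> \<nu> (pneg S (pneg S ?n))"
      using cont_valuationD(4)[OF nu(1)] pneg_closed by blast
    also have "\<dots> = \<nu> ?n" using nu(2) nS unfolding normal_valuation_def by blast
    also have "\<dots> = 0" using valuation_null_COpen_pjoin[OF nu(1)] .
    finally show False using cont_valuationD(1)[OF nu(1) pneg_closed[of ?t]] nu(3) by linarith
  qed
  moreover have "complete_bool_alg B" using complete_bool_alg_iff_cba_on cba_on_COpen by blast
  ultimately show ?thesis unfolding localizable_def using COpen_ptop by simp
qed

end

section \<open>Morphisms between Stonean frames\<close>

lemma (in coherent_frame) frame_hom_eq_if_eq_on_COpen:
  assumes f: "frame_hom S T f" and g: "frame_hom S T g" and eq: "\<forall>c\<in>B. f c = g c" and x: "x \<in> S"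
  shows "f x = g x"
proof -
  obtain C where C: "C \<subseteq> B" "x = pjoin S C" using coherent x unfolding coherent_def by blast
  have CS: "C \<subseteq> S" using C COpen_subset by blast
  have "f ` C = g ` C" using C eq by (intro image_cong) auto
  thus ?thesis using f g CS C(2) unfolding frame_hom_def by metis
qed

locale stonean_pair = S1: stonean_on H' + S2: stonean_on H
  for H' :: "'c::order set" and H :: "'a::order set"
begin

lemma bool_hom_sup_COpen:
  assumes f: "open_frame_hom H' H f"
  shows "bool_hom_sup (COpen H') (COpen H) f"
proof -
  note F = open_frame_homD[OF f]
  have fB: "f c \<in> COpen H" if c: "c \<in> COpen H'" for c
  proof -
    have cS: "c \<in> H'" using c S1.COpen_subset by blast
    have "pmeet2 H (f c) (f (pneg H' c)) = pbot H" "pjoin2 H (f c) (f (pneg H' c)) = ptop H"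
      using F(2,3) open_frame_hom_pbot[OF f] open_frame_hom_pjoin2[OF f] S1.pneg_closed cS
        S1.pmeet2_pneg_right S1.COpen_iff_complemented S1.complemented_pjoin2_pneg c
      by metis+
    hence "S2.complemented (f c)" unfolding S2.complemented_def
      using F(1) cS S1.pneg_closed by blast
    thus ?thesis using S2.COpen_iff_complemented by blast
  qed
  show ?thesis unfolding bool_hom_sup_def
  proof (intro conjI ballI allI impI)
    show "f a \<in> COpen H" if "a \<in> COpen H'" for a using fB that .
    show "f (ptop (COpen H')) = ptop (COpen H)" using S1.COpen_ptop S2.COpen_ptop F(2) by simp
    show "f (pbot (COpen H')) = pbot (COpen H)"
      using S1.COpen_pbot S2.COpen_pbot open_frame_hom_pbot[OF f] by simp
    fix a b assume ab: "a \<in> COpen H'" "b \<in> COpen H'"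
    have abS: "a \<in> H'" "b \<in> H'" using ab S1.COpen_subset by auto
    show "f (pmeet2 (COpen H') a b) = pmeet2 (COpen H) (f a) (f b)"
      using S1.COpen_pmeet2 S2.COpen_pmeet2 ab fB F(3) abS by simp
    show "f (pjoin2 (COpen H') a b) = pjoin2 (COpen H) (f a) (f b)"
      using S1.COpen_pjoin2 S2.COpen_pjoin2 ab fB open_frame_hom_pjoin2[OF f] abS by simp
  next
    fix X assume X: "X \<subseteq> COpen H'"
    have XS: "X \<subseteq> H'" using X S1.COpen_subset by blast
    have "f (pjoin (COpen H') X) = f (pneg H' (pneg H' (pjoin H' X)))"
      using S1.COpen_pjoin X by simp
    also have "\<dots> = pneg H (pneg H (pjoin H (f ` X)))"
      using S1.open_frame_hom_pneg[OF f] S1.pneg_closed S1.pjoin_closed XS F(4) by simp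
    also have "\<dots> = pjoin (COpen H) (f ` X)"
      using S2.COpen_pjoin fB X by (metis image_subset_iff subsetD)
    finally show "f (pjoin (COpen H') X) = pjoin (COpen H) (f ` X)" .
  qed
qed

text \<open>The extension of g is the composite H' \<cong> Idl (COpen H') \<rightarrow> Idl (COpen H) \<cong> H.\<close>

lemma open_frame_hom_extends_bool_hom_sup:
  assumes g: "bool_hom_sup (COpen H') (COpen H) g"
  shows "\<exists>f. open_frame_hom H' H f \<and> (\<forall>c\<in>COpen H'. f c = g c)"
proof -
  interpret g: cba_hom "COpen H'" "COpen H" g
    unfolding cba_hom_def cba_hom_axioms_def using S1.cba_on_COpen S2.cba_on_COpen g by blast
  define f where "f x = pjoin H (ideal_map (COpen H') (COpen H) g (S1.copens_below x))" for x
  have "open_frame_hom H' H f"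
    unfolding f_def[abs_def]
    by (rule open_frame_hom_comp[OF open_frame_hom_comp[OF S1.open_frame_hom_copens_below
          g.open_frame_hom_ideal_map] S2.open_frame_hom_pjoin_Idl_COpen])
  moreover have "f c = g c" if c: "c \<in> COpen H'" for c
  proof -
    have "S1.copens_below c \<in> Idl (COpen H')" using S1.copens_below_Idl c S1.COpen_subset by blast
    moreover have "g.down_image (S1.copens_below c) = {b\<in>COpen H. b \<le> g c}"
      unfolding g.down_image_def S1.copens_below_def
      using c g.hom_mono g.hom_closed by (blast intro: order_trans)
    ultimately have "f c = pjoin H {b\<in>COpen H. b \<le> g c}"
      unfolding f_def using g.ideal_map_eq_down_image by simp
    also have "\<dots> = g c"
      using g.hom_closed c S2.COpen_subset by (intro pjoin_eq_greatest) auto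
    finally show ?thesis .
  qed
  ultimately show ?thesis by blast
qed

end

section \<open>Hyperstonean frames and localizable algebras\<close>

lemma hyperstonean_imp_stonean: "hyperstonean S \<Longrightarrow> stonean S"
  unfolding hyperstonean_def by blast

lemma localizable_imp_cba_on: "localizable A \<Longrightarrow> cba_on A"
  unfolding localizable_def using complete_bool_alg_iff_cba_on by blast

lemma hyperstonean_imp_localizable_COpen:
  assumes "hyperstonean H"
  shows "localizable (COpen H)"
proof -
  interpret stonean_on H using assms hyperstonean_imp_stonean stonean_imp_stonean_on by blast
  show ?thesis using localizable_COpen_if_valuations assms unfolding hyperstonean_def by blast
qed

lemma localizable_imp_hyperstonean_Idl: "localizable A \<Longrightarrow> hyperstonean (Idl A)"
  using cba_on.hyperstonean_Idl localizable_imp_cba_on by blast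

lemma coherent_frame_Idl_COpen:
  assumes "frame H" "coherent H"
  shows "bij_betw (pjoin H) (Idl (COpen H)) H" "frame_hom (Idl (COpen H)) H (pjoin H)"
proof -
  interpret coherent_frame H
    using assms frame_imp_frame_on unfolding coherent_frame_def coherent_frame_axioms_def by blast
  show "bij_betw (pjoin H) (Idl (COpen H)) H" "frame_hom (Idl (COpen H)) H (pjoin H)"
    using order_iso_pjoin_Idl_COpen open_frame_hom_pjoin_Idl_COpen
    unfolding order_iso_on_def open_frame_hom_def by blast+
qed

lemma cba_COpen_Idl:
  assumes "complete_bool_alg A"
  shows "bij_betw (\<lambda>a. {b\<in>A. b \<le> a}) A (COpen (Idl A))"
    "bool_hom_sup A (COpen (Idl A)) (\<lambda>a. {b\<in>A. b \<le> a})"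
proof -
  interpret cba_on A using assms complete_bool_alg_iff_cba_on by blast
  have "(\<lambda>a. {b\<in>A. b \<le> a}) = down" unfolding down_def ..
  thus "bij_betw (\<lambda>a. {b\<in>A. b \<le> a}) A (COpen (Idl A))"
    "bool_hom_sup A (COpen (Idl A)) (\<lambda>a. {b\<in>A. b \<le> a})"
    using order_iso_down order_iso_bool_hom_sup[OF order_iso_down]
      unfolding order_iso_on_def by simp_all
qed

lemma stonean_pairI: "stonean H' \<Longrightarrow> stonean H \<Longrightarrow> stonean_pair H' H"
  unfolding stonean_pair_def by (blast intro: stonean_imp_stonean_on)

lemma stonean_bool_hom_sup_COpen:
  "stonean H' \<Longrightarrow> stonean H \<Longrightarrow> open_frame_hom H' H f \<Longrightarrow> bool_hom_sup (COpen H') (COpen H) f"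
  by (rule stonean_pair.bool_hom_sup_COpen[OF stonean_pairI])

lemma stonean_unique_open_extension:
  assumes "stonean H'" "stonean H" "bool_hom_sup (COpen H') (COpen H) g"
  shows "\<exists>f. open_frame_hom H' H f \<and> (\<forall>c\<in>COpen H'. f c = g c) \<and>
    (\<forall>f'. open_frame_hom H' H f' \<and> (\<forall>c\<in>COpen H'. f' c = g c) \<longrightarrow> (\<forall>x\<in>H'. f' x = f x))"
proof -
  interpret stonean_pair H' H using stonean_pairI assms(1,2) .
  obtain f where f: "open_frame_hom H' H f" "\<forall>c\<in>COpen H'. f c = g c"
    using open_frame_hom_extends_bool_hom_sup assms(3) by blast
  have "f' x = f x" if "open_frame_hom H' H f'" "\<forall>c\<in>COpen H'. f' c = g c" "x \<in> H'" for f' x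
    using S1.frame_hom_eq_if_eq_on_COpen[of H f' f] that f unfolding open_frame_hom_def by simp
  thus ?thesis using f by blast
qed

lemma cba_open_frame_hom_ideal_map:
  "complete_bool_alg A \<Longrightarrow> complete_bool_alg B \<Longrightarrow> bool_hom_sup A B h \<Longrightarrow>
    open_frame_hom (Idl A) (Idl B) (ideal_map A B h)"
  by (rule cba_hom.open_frame_hom_ideal_map)
    (simp add: cba_hom_def cba_hom_axioms_def complete_bool_alg_iff_cba_on)

theorem mainTheorem9:
  shows "(\<forall>H::'a::order set. hyperstonean H \<longrightarrow> localizable (COpen H)) \<and>
   (\<forall>A::'b::order set. localizable A \<longrightarrow> hyperstonean (Idl A)) \<and>
   (\<forall>H::'a set. hyperstonean H \<longrightarrow>
      bij_betw (pjoin H) (Idl (COpen H)) H \<and> frame_hom (Idl (COpen H)) H (pjoin H)) \<and>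
   (\<forall>A::'b set. localizable A \<longrightarrow>
      bij_betw (\<lambda>a. {b\<in>A. b \<le> a}) A (COpen (Idl A)) \<and>
      bool_hom_sup A (COpen (Idl A)) (\<lambda>a. {b\<in>A. b \<le> a})) \<and>
   (\<forall>(H::'a set) (H'::'c::order set) fs. hyperstonean H \<and> hyperstonean H' \<and>
      open_frame_hom H' H fs \<longrightarrow> bool_hom_sup (COpen H') (COpen H) fs) \<and>
   (\<forall>(H::'a set) (H'::'c set) g. hyperstonean H \<and> hyperstonean H' \<and>
      bool_hom_sup (COpen H') (COpen H) g \<longrightarrow>
      (\<exists>fs. open_frame_hom H' H fs \<and> (\<forall>c\<in>COpen H'. fs c = g c) \<and>
         (\<forall>fs'. open_frame_hom H' H fs' \<and> (\<forall>c\<in>COpen H'. fs' c = g c) \<longrightarrow>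
            (\<forall>x\<in>H'. fs' x = fs x)))) \<and>
   (\<forall>(A::'b set) (B::'d::order set) h. localizable A \<and> localizable B \<and>
      bool_hom_sup A B h \<longrightarrow> open_frame_hom (Idl A) (Idl B) (ideal_map A B h))"
proof (intro conjI allI impI; (elim conjE)?)
  fix H :: "'a set" assume "hyperstonean H"
  thus "localizable (COpen H)" by (rule hyperstonean_imp_localizable_COpen)
  have "stonean H" using \<open>hyperstonean H\<close> by (rule hyperstonean_imp_stonean)
  thus "bij_betw (pjoin H) (Idl (COpen H)) H" "frame_hom (Idl (COpen H)) H (pjoin H)"
    using coherent_frame_Idl_COpen unfolding stonean_def by blast+
next
  fix A :: "'b set" assume "localizable A"
  thus "hyperstonean (Idl A)" by (rule localizable_imp_hyperstonean_Idl)
  have "complete_bool_alg A" using \<open>localizable A\<close> unfolding localizable_def by blast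
  thus "bij_betw (\<lambda>a. {b\<in>A. b \<le> a}) A (COpen (Idl A))"
    "bool_hom_sup A (COpen (Idl A)) (\<lambda>a. {b\<in>A. b \<le> a})"
    by (rule cba_COpen_Idl)+
next
  fix H :: "'a set" and H' :: "'c set" and f g
  assume "hyperstonean H" "hyperstonean H'"
  hence st: "stonean H" "stonean H'" using hyperstonean_imp_stonean by blast+
  show "bool_hom_sup (COpen H') (COpen H) f" if "open_frame_hom H' H f"
    using stonean_bool_hom_sup_COpen[OF st(2,1) that] .
  show "\<exists>fs. open_frame_hom H' H fs \<and> (\<forall>c\<in>COpen H'. fs c = g c) \<and>
      (\<forall>fs'. open_frame_hom H' H fs' \<and> (\<forall>c\<in>COpen H'. fs' c = g c) \<longrightarrow> (\<forall>x\<in>H'. fs' x = fs x))"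
    if "bool_hom_sup (COpen H') (COpen H) g"
    using stonean_unique_open_extension[OF st(2,1) that] .
next
  fix A :: "'b set" and B :: "'d set" and h
  assume "localizable A" "localizable B" "bool_hom_sup A B h"
  thus "open_frame_hom (Idl A) (Idl B) (ideal_map A B h)"
    using cba_open_frame_hom_ideal_map unfolding localizable_def by blast
qed

end
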